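(* Let $\rho^\star \in \mathbb{R}^{n\times n}$ be an optimal solution of the SDP $\max_{\rho} \operatorname{tr}(C\rho)$ subject to $\rho \succeq 0$, $\rho_{ii} = 1/n$ for all $i\in[n]$, where $C\in\mathbb{R}^{n\times n}$ is a symmetric cost matrix normalized in operator norm, $\|C\|=1$, with the block structure $C = \begin{pmatrix} 0 & B \\ B^T & 0 \end{pmatrix}$ for some $B\in\mathbb{R}^{n/2\times n/2}$. Let $\rho\in \mathbb{R}^{n\times n}$ be a positive semidefinite approximate solution with \[ \operatorname{tr}(C\rho^\star) - \operatorname{tr}(C\rho) \leq \epsilon \quad\text{and}\quad \sum_i \Big|\rho_{ii}-\frac{1}{n}\Big| \leq \epsilon, \] with $0\leq\epsilon\leq 1/2$. Let $x\in \{-1,1\}^{n}$ be the vector obtained by applying the randomized rounding procedure to $\rho$, i.e. compute the symmetric matrix square root $\sqrt{\rho}$, sample $g_j \overset{\mathrm{iid}}{\sim} \mathcal{N}(0,1)$ for $j\in[n]$, and set $x_i = \operatorname{sgn}\big(\sum_j (\sqrt{\rho})_{ij} g_j\big)$ for $i\in[n]$. Then \[ \mathbb{E}[x^T C x] \geq \left(\frac{4}{\pi} - 1\right) n \operatorname{tr}(C \rho^\star) - \mathcal{O}(n\epsilon^{1/3}). \]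
   Context: The expectation is over the Gaussian vector $g$ in the rounding procedure. $\|C\|$ denotes the largest singular value of $C$. *)

theory Defs
  imports "HOL-Probability.Probability"
begin

text \<open>Real n x n matrices are represented as functions nat => nat => real,
  only entries with indices below n being relevant (indices 0..n-1 stand for [n]).\<close>

definition mat_trace :: "nat \<Rightarrow> (nat \<Rightarrow> nat \<Rightarrow> real) \<Rightarrow> real" where
  "mat_trace n A = (\<Sum>i<n. A i i)"

definition mat_mult :: "nat \<Rightarrow> (nat \<Rightarrow> nat \<Rightarrow> real) \<Rightarrow> (nat \<Rightarrow> nat \<Rightarrow> real) \<Rightarrow> (nat \<Rightarrow> nat \<Rightarrow> real)" where
  "mat_mult n A B = (\<lambda>i j. \<Sum>k<n. A i k * B k j)"

definition psd :: "nat \<Rightarrow> (nat \<Rightarrow> nat \<Rightarrow> real) \<Rightarrow> bool" where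
  "psd n A \<longleftrightarrow> (\<forall>i<n. \<forall>j<n. A i j = A j i) \<and>
     (\<forall>x :: nat \<Rightarrow> real. 0 \<le> (\<Sum>i<n. \<Sum>j<n. x i * A i j * x j))"

definition op_norm :: "nat \<Rightarrow> (nat \<Rightarrow> nat \<Rightarrow> real) \<Rightarrow> real" where
  "op_norm n A = Sup {sqrt (\<Sum>i<n. (\<Sum>j<n. A i j * x j)\<^sup>2) | x :: nat \<Rightarrow> real.
                        (\<Sum>j<n. (x j)\<^sup>2) \<le> 1}"

definition mat_sqrt :: "nat \<Rightarrow> (nat \<Rightarrow> nat \<Rightarrow> real) \<Rightarrow> (nat \<Rightarrow> nat \<Rightarrow> real)" where
  "mat_sqrt n A = (THE S. psd n S \<and> (\<forall>i<n. \<forall>j<n. mat_mult n S S i j = A i j) \<and>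
                      (\<forall>i j. \<not> (i < n \<and> j < n) \<longrightarrow> S i j = 0))"

text \<open>Block matrix [[0, B],[B^T, 0]] of size 2m x 2m, B of size m x m.\<close>
definition block_cost :: "nat \<Rightarrow> (nat \<Rightarrow> nat \<Rightarrow> real) \<Rightarrow> (nat \<Rightarrow> nat \<Rightarrow> real)" where
  "block_cost m B = (\<lambda>i j. if i < m \<and> m \<le> j \<and> j < 2*m then B i (j - m)
                          else if m \<le> i \<and> i < 2*m \<and> j < m then B j (i - m)
                          else 0)"

definition sdp_feasible :: "nat \<Rightarrow> (nat \<Rightarrow> nat \<Rightarrow> real) \<Rightarrow> bool" where
  "sdp_feasible n \<rho> \<longleftrightarrow> psd n \<rho> \<and> (\<forall>i<n. \<rho> i i = 1 / real n)"

definition sdp_optimal :: "nat \<Rightarrow> (nat \<Rightarrow> nat \<Rightarrow> real) \<Rightarrow> (nat \<Rightarrow> nat \<Rightarrow> real) \<Rightarrow> bool" where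
  "sdp_optimal n C \<rho> \<longleftrightarrow> sdp_feasible n \<rho> \<and>
     (\<forall>\<sigma>. sdp_feasible n \<sigma> \<longrightarrow> mat_trace n (mat_mult n C \<sigma>) \<le> mat_trace n (mat_mult n C \<rho>))"

text \<open>Sign with values in {-1,1} (convention sign 0 = 1; a null event for nonzero rows).\<close>
definition sgn_pm :: "real \<Rightarrow> real" where
  "sgn_pm t = (if t < 0 then -1 else 1)"

definition gauss_vec :: "nat \<Rightarrow> (nat \<Rightarrow> real) measure" where
  "gauss_vec n = PiM {..<n} (\<lambda>_. density lborel std_normal_density)"

definition rounding :: "nat \<Rightarrow> (nat \<Rightarrow> nat \<Rightarrow> real) \<Rightarrow> (nat \<Rightarrow> real) \<Rightarrow> nat \<Rightarrow> real" where
  "rounding n \<rho> g = (\<lambda>i. sgn_pm (\<Sum>j<n. mat_sqrt n \<rho> i j * g j))"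

definition quad_form :: "nat \<Rightarrow> (nat \<Rightarrow> nat \<Rightarrow> real) \<Rightarrow> (nat \<Rightarrow> real) \<Rightarrow> real" where
  "quad_form n C x = (\<Sum>i<n. \<Sum>j<n. x i * C i j * x j)"

end

(*
  Let S be the PSD square root of rho (obtained from a Heron-type iteration) and u_i the rows
  of S normalised to unit length; the rounding x agrees with y_i = sgn <u_i, g> except on rows
  with rho_ii = 0. For a unit vector u one has E[sgn <u, g> <v, g>] = sqrt (2/pi) <u, v>
  (Rietz), so the residuals y_i - sqrt (2/pi) <u_i, g> have a PSD covariance Z with diagonal
  1 - 2/pi, and E[y y^T] = Z + (2/pi) X with X the Gram matrix of the u_i.
  Because C is bipartite, flipping the signs of one half of the coordinates turns
  Z / (n (1 - 2/pi)) into a feasible point of the SDP with objective -<C, Z> / (n (1 - 2/pi)),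
  whence <C, Z> >= -(1 - 2/pi) n tr(C rho_opt). Since ||C|| = 1 and the u_i are close to
  sqrt n times the rows of S, <C, X> >= n tr(C rho) - O(n sqrt eps); likewise x^T C x and
  y^T C y differ by O(n sqrt eps). With tr(C rho) >= tr(C rho_opt) - eps this gives
  E[x^T C x] >= (4/pi - 1) n tr(C rho_opt) - 8 n sqrt eps, and sqrt eps <= eps^(1/3).
*)

theory Submission
  imports Defs
begin

section \<open>Matrices and bilinear forms\<close>

definition zero_outside :: "nat \<Rightarrow> (nat \<Rightarrow> nat \<Rightarrow> real) \<Rightarrow> bool" where
  "zero_outside n A \<longleftrightarrow> (\<forall>i j. \<not> (i < n \<and> j < n) \<longrightarrow> A i j = 0)"

definition sym_mat :: "nat \<Rightarrow> (nat \<Rightarrow> nat \<Rightarrow> real) \<Rightarrow> bool" where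
  "sym_mat n A \<longleftrightarrow> (\<forall>i<n. \<forall>j<n. A i j = A j i)"

definition id_mat :: "nat \<Rightarrow> nat \<Rightarrow> nat \<Rightarrow> real" where
  "id_mat n = (\<lambda>i j. if i = j \<and> i < n then 1 else 0)"

definition mat_vec :: "nat \<Rightarrow> (nat \<Rightarrow> nat \<Rightarrow> real) \<Rightarrow> (nat \<Rightarrow> real) \<Rightarrow> nat \<Rightarrow> real" where
  "mat_vec n A x = (\<lambda>i. \<Sum>j<n. A i j * x j)"

definition bilin :: "nat \<Rightarrow> (nat \<Rightarrow> nat \<Rightarrow> real) \<Rightarrow> (nat \<Rightarrow> real) \<Rightarrow> (nat \<Rightarrow> real) \<Rightarrow> real" where
  "bilin n A x y = (\<Sum>i<n. \<Sum>j<n. x i * A i j * y j)"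

definition dot :: "nat \<Rightarrow> (nat \<Rightarrow> real) \<Rightarrow> (nat \<Rightarrow> real) \<Rightarrow> real" where
  "dot n x y = (\<Sum>k<n. x k * y k)"

definition sqnorm :: "nat \<Rightarrow> (nat \<Rightarrow> real) \<Rightarrow> real" where
  "sqnorm n x = (\<Sum>i<n. (x i)\<^sup>2)"

lemma psd_iff_bilin: "psd n A \<longleftrightarrow> sym_mat n A \<and> (\<forall>x. 0 \<le> bilin n A x x)"
  unfolding psd_def sym_mat_def bilin_def by auto

lemma quad_form_eq_bilin: "quad_form n A x = bilin n A x x"
  by (simp add: quad_form_def bilin_def)

lemma bilin_add_left: "bilin n A (\<lambda>i. x i + y i) z = bilin n A x z + bilin n A y z"
  by (simp add: bilin_def algebra_simps sum.distrib)

lemma bilin_add_right: "bilin n A z (\<lambda>i. x i + y i) = bilin n A z x + bilin n A z y"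
  by (simp add: bilin_def algebra_simps sum.distrib)

lemma bilin_diff_left: "bilin n A (\<lambda>i. x i - y i) z = bilin n A x z - bilin n A y z"
  by (simp add: bilin_def algebra_simps sum_subtractf)

lemma bilin_diff_right: "bilin n A z (\<lambda>i. x i - y i) = bilin n A z x - bilin n A z y"
  by (simp add: bilin_def algebra_simps sum_subtractf)

lemma bilin_scale_left: "bilin n A (\<lambda>i. t * x i) z = t * bilin n A x z"
  by (simp add: bilin_def sum_distrib_left algebra_simps)

lemma bilin_scale_right: "bilin n A z (\<lambda>i. t * x i) = t * bilin n A z x"
  by (simp add: bilin_def sum_distrib_left algebra_simps)

lemma bilin_add_mat: "bilin n (\<lambda>i j. A i j + B i j) x y = bilin n A x y + bilin n B x y"
  by (simp add: bilin_def algebra_simps sum.distrib)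

lemma bilin_diff_mat: "bilin n (\<lambda>i j. A i j - B i j) x y = bilin n A x y - bilin n B x y"
  by (simp add: bilin_def algebra_simps sum_subtractf)

lemma bilin_scale_mat: "bilin n (\<lambda>i j. t * A i j) x y = t * bilin n A x y"
  by (simp add: bilin_def sum_distrib_left algebra_simps)

lemma bilin_eq_dot_mat_vec: "bilin n A x y = dot n x (mat_vec n A y)"
  by (simp add: bilin_def dot_def mat_vec_def sum_distrib_left algebra_simps)

lemma bilin_commute: "sym_mat n A \<Longrightarrow> bilin n A x y = bilin n A y x"
  unfolding bilin_def sym_mat_def
  by (subst sum.swap) (auto intro!: sum.cong simp: algebra_simps)

lemma bilin_id_mat: "bilin n (id_mat n) x y = dot n x y"
proof -
  have "bilin n (id_mat n) x y = (\<Sum>i<n. \<Sum>j<n. if j = i then x i * y i else 0)"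
    unfolding bilin_def id_mat_def by (intro sum.cong refl) auto
  then show ?thesis by (simp add: dot_def)
qed

lemma dot_commute: "dot n x y = dot n y x"
  unfolding dot_def by (simp add: mult.commute)

lemma dot_self: "dot n x x = sqnorm n x"
  by (simp add: dot_def sqnorm_def power2_eq_square)

lemma sqnorm_nonneg: "0 \<le> sqnorm n x"
  by (simp add: sqnorm_def sum_nonneg)

lemma sqnorm_eq_0_imp: "sqnorm n x = 0 \<Longrightarrow> k < n \<Longrightarrow> x k = 0"
  unfolding sqnorm_def by (subst (asm) sum_nonneg_eq_0_iff) auto

lemma quadratic_nonneg_discriminant:
  fixes a b c :: real
  assumes c: "0 \<le> c" and nonneg: "\<And>t. 0 \<le> a + 2*b*t + c*t\<^sup>2"
  shows "b\<^sup>2 \<le> a*c"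
proof (cases "c = 0")
  case True
  show ?thesis
  proof (rule ccontr)
    assume "\<not> ?thesis"
    then have "b \<noteq> 0" using True by auto
    have "0 \<le> a + 2*b*(-(\<bar>a\<bar>+1)/(2*b)) + c*(-(\<bar>a\<bar>+1)/(2*b))\<^sup>2" by (rule nonneg)
    also have "\<dots> = a - (\<bar>a\<bar> + 1)" using \<open>b \<noteq> 0\<close> True by (simp add: field_simps)
    finally show False by linarith
  qed
next
  case False
  then have "c > 0" using c by auto
  have "0 \<le> a + 2*b*(-b/c) + c*(-b/c)\<^sup>2" by (rule nonneg)
  also have "\<dots> = a - b\<^sup>2/c" using \<open>c > 0\<close> by (simp add: field_simps power2_eq_square)
  finally show ?thesis using \<open>c > 0\<close> by (simp add: field_simps)
qed

lemma psd_cauchy_schwarz: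
  assumes "sym_mat n A" and nonneg: "\<And>z. 0 \<le> bilin n A z z"
  shows "(bilin n A x y)\<^sup>2 \<le> bilin n A x x * bilin n A y y"
proof (rule quadratic_nonneg_discriminant[OF nonneg])
  fix t
  have "bilin n A (\<lambda>i. x i + t * y i) (\<lambda>i. x i + t * y i)
      = bilin n A x x + 2 * bilin n A x y * t + bilin n A y y * t\<^sup>2"
    using bilin_commute[OF assms(1), of y x]
    by (simp add: bilin_add_left bilin_add_right bilin_scale_left bilin_scale_right
        power2_eq_square algebra_simps)
  then show "0 \<le> bilin n A x x + 2 * bilin n A x y * t + bilin n A y y * t\<^sup>2"
    by (metis nonneg)
qed

lemma psd_kernel:
  assumes "sym_mat n A" and nonneg: "\<And>z. 0 \<le> bilin n A z z" and "bilin n A x x = 0" and "i < n"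
  shows "mat_vec n A x i = 0"
proof -
  have "(bilin n A (mat_vec n A x) x)\<^sup>2 = 0"
    using psd_cauchy_schwarz[OF assms(1,2), of "mat_vec n A x" x] assms(3) by simp
  then have "sqnorm n (mat_vec n A x) = 0"
    by (simp add: bilin_eq_dot_mat_vec dot_self)
  then show ?thesis using assms(4) by (rule sqnorm_eq_0_imp)
qed

lemma psd_contraction:
  assumes "sym_mat n A" and nonneg: "\<And>z. 0 \<le> bilin n A z z" and le: "\<And>z. bilin n A z z \<le> sqnorm n z"
  shows "sqnorm n (mat_vec n A x) \<le> sqnorm n x"
proof -
  let ?y = "mat_vec n A x"
  have "(sqnorm n ?y)\<^sup>2 \<le> bilin n A ?y ?y * bilin n A x x"
    using psd_cauchy_schwarz[OF assms(1,2), of ?y x] by (simp add: bilin_eq_dot_mat_vec dot_self)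
  also have "\<dots> \<le> sqnorm n ?y * sqnorm n x"
    using nonneg le by (intro mult_mono) (auto simp: sqnorm_nonneg)
  finally have "(sqnorm n ?y)\<^sup>2 \<le> sqnorm n ?y * sqnorm n x" .
  then show ?thesis using sqnorm_nonneg[of n ?y]
    by (cases "sqnorm n ?y = 0") (auto simp: power2_eq_square sqnorm_nonneg)
qed

lemma mat_mult_assoc: "mat_mult n (mat_mult n A B) C = mat_mult n A (mat_mult n B C)"
proof -
  have "(\<Sum>k<n. (\<Sum>l<n. A i l * B l k) * C k j) = (\<Sum>l<n. A i l * (\<Sum>k<n. B l k * C k j))" for i j
  proof -
    have "(\<Sum>k<n. (\<Sum>l<n. A i l * B l k) * C k j) = (\<Sum>k<n. \<Sum>l<n. A i l * B l k * C k j)"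
      by (simp add: sum_distrib_right)
    also have "\<dots> = (\<Sum>l<n. \<Sum>k<n. A i l * B l k * C k j)" by (rule sum.swap)
    also have "\<dots> = (\<Sum>l<n. A i l * (\<Sum>k<n. B l k * C k j))"
      by (simp add: sum_distrib_left mult.assoc)
    finally show ?thesis .
  qed
  then show ?thesis by (simp add: mat_mult_def fun_eq_iff)
qed

lemma mat_mult_id_left:
  assumes "zero_outside n A" shows "mat_mult n (id_mat n) A = A"
proof (intro ext)
  fix i j
  show "mat_mult n (id_mat n) A i j = A i j"
  proof (cases "i < n")
    case True
    have "mat_mult n (id_mat n) A i j = (\<Sum>k<n. if k = i then A i j else 0)"
      unfolding mat_mult_def id_mat_def by (intro sum.cong) auto
    then show ?thesis using True by simp
  qed (use assms in \<open>auto simp: mat_mult_def id_mat_def zero_outside_def\<close>)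
qed

lemma mat_mult_id_right:
  assumes "zero_outside n A" shows "mat_mult n A (id_mat n) = A"
proof (intro ext)
  fix i j
  show "mat_mult n A (id_mat n) i j = A i j"
  proof (cases "j < n")
    case True
    have "mat_mult n A (id_mat n) i j = (\<Sum>k<n. if k = j then A i j else 0)"
      unfolding mat_mult_def id_mat_def by (intro sum.cong) auto
    then show ?thesis using True by simp
  qed (use assms in \<open>auto simp: mat_mult_def id_mat_def zero_outside_def\<close>)
qed

lemma mat_mult_add_left:
  "mat_mult n (\<lambda>i j. A i j + B i j) C = (\<lambda>i j. mat_mult n A C i j + mat_mult n B C i j)"
  by (simp add: mat_mult_def algebra_simps sum.distrib)

lemma mat_mult_add_right:
  "mat_mult n C (\<lambda>i j. A i j + B i j) = (\<lambda>i j. mat_mult n C A i j + mat_mult n C B i j)"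
  by (simp add: mat_mult_def algebra_simps sum.distrib)

lemma mat_mult_diff_left:
  "mat_mult n (\<lambda>i j. A i j - B i j) C = (\<lambda>i j. mat_mult n A C i j - mat_mult n B C i j)"
  by (simp add: mat_mult_def algebra_simps sum_subtractf)

lemma mat_mult_diff_right:
  "mat_mult n C (\<lambda>i j. A i j - B i j) = (\<lambda>i j. mat_mult n C A i j - mat_mult n C B i j)"
  by (simp add: mat_mult_def algebra_simps sum_subtractf)

lemma mat_mult_scale_left: "mat_mult n (\<lambda>i j. r * A i j) C = (\<lambda>i j. r * mat_mult n A C i j)"
  by (simp add: mat_mult_def sum_distrib_left algebra_simps)

lemma mat_mult_scale_right: "mat_mult n C (\<lambda>i j. r * A i j) = (\<lambda>i j. r * mat_mult n C A i j)"
  by (simp add: mat_mult_def sum_distrib_left algebra_simps)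

lemma mat_mult_transpose:
  "sym_mat n A \<Longrightarrow> sym_mat n B \<Longrightarrow> i < n \<Longrightarrow> j < n \<Longrightarrow> mat_mult n A B j i = mat_mult n B A i j"
  unfolding mat_mult_def sym_mat_def by (intro sum.cong refl) (auto simp: mult.commute)

lemma mat_vec_mat_mult: "mat_vec n (mat_mult n A B) y = mat_vec n A (mat_vec n B y)"
proof -
  have "(\<Sum>j<n. (\<Sum>k<n. A i k * B k j) * y j) = (\<Sum>k<n. A i k * (\<Sum>j<n. B k j * y j))" for i
  proof -
    have "(\<Sum>j<n. (\<Sum>k<n. A i k * B k j) * y j) = (\<Sum>j<n. \<Sum>k<n. A i k * B k j * y j)"
      by (simp add: sum_distrib_right)
    also have "\<dots> = (\<Sum>k<n. \<Sum>j<n. A i k * B k j * y j)" by (rule sum.swap)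
    also have "\<dots> = (\<Sum>k<n. A i k * (\<Sum>j<n. B k j * y j))"
      by (simp add: sum_distrib_left mult.assoc)
    finally show ?thesis .
  qed
  then show ?thesis by (simp add: mat_vec_def mat_mult_def fun_eq_iff)
qed

lemma dot_mat_vec_sym: "sym_mat n P \<Longrightarrow> dot n x (mat_vec n P y) = dot n (mat_vec n P x) y"
  by (metis bilin_commute bilin_eq_dot_mat_vec dot_commute)

lemma bilin_sandwich:
  assumes "sym_mat n P"
  shows "bilin n (mat_mult n P (mat_mult n A P)) x x = bilin n A (mat_vec n P x) (mat_vec n P x)"
  by (simp add: bilin_eq_dot_mat_vec mat_vec_mat_mult dot_mat_vec_sym[OF assms])

lemma zero_outside_mat_mult: "zero_outside n A \<Longrightarrow> zero_outside n B \<Longrightarrow> zero_outside n (mat_mult n A B)"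
  unfolding zero_outside_def mat_mult_def by auto

lemma zero_outside_id_mat: "zero_outside n (id_mat n)"
  unfolding zero_outside_def id_mat_def by auto

lemma zero_outside_diff: "zero_outside n A \<Longrightarrow> zero_outside n B \<Longrightarrow> zero_outside n (\<lambda>i j. A i j - B i j)"
  unfolding zero_outside_def by auto

lemma zero_outside_scale: "zero_outside n A \<Longrightarrow> zero_outside n (\<lambda>i j. r * A i j)"
  unfolding zero_outside_def by auto

lemma sym_mat_add: "sym_mat n A \<Longrightarrow> sym_mat n B \<Longrightarrow> sym_mat n (\<lambda>i j. A i j + B i j)"
  unfolding sym_mat_def by auto

lemma sym_mat_diff: "sym_mat n A \<Longrightarrow> sym_mat n B \<Longrightarrow> sym_mat n (\<lambda>i j. A i j - B i j)"
  unfolding sym_mat_def by auto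

lemma sym_mat_scale: "sym_mat n A \<Longrightarrow> sym_mat n (\<lambda>i j. r * A i j)"
  unfolding sym_mat_def by auto

lemma sym_mat_id_mat: "sym_mat n (id_mat n)"
  unfolding sym_mat_def id_mat_def by auto

section \<open>Square roots of positive semidefinite matrices\<close>

text \<open>
  For \<open>0 \<le> B \<le> I\<close> the iteration \<open>L \<mapsto> (B + L\<^sup>2)/2\<close> started at \<open>0\<close> increases to a
  solution of \<open>(I - L)\<^sup>2 = I - B\<close>. All iterates and all their increments are polynomials
  in \<open>B\<close> with nonnegative coefficients, which is what makes them commute and be PSD.
\<close>

primrec mat_pow :: "nat \<Rightarrow> (nat \<Rightarrow> nat \<Rightarrow> real) \<Rightarrow> nat \<Rightarrow> (nat \<Rightarrow> nat \<Rightarrow> real)" where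
  "mat_pow n B 0 = id_mat n"
| "mat_pow n B (Suc l) = mat_mult n B (mat_pow n B l)"

inductive_set nonneg_poly :: "nat \<Rightarrow> (nat \<Rightarrow> nat \<Rightarrow> real) \<Rightarrow> (nat \<Rightarrow> nat \<Rightarrow> real) set"
  for n B where
  nonneg_poly_pow: "mat_pow n B l \<in> nonneg_poly n B"
| nonneg_poly_scale: "A \<in> nonneg_poly n B \<Longrightarrow> 0 \<le> r \<Longrightarrow> (\<lambda>i j. r * A i j) \<in> nonneg_poly n B"
| nonneg_poly_add: "A \<in> nonneg_poly n B \<Longrightarrow> A' \<in> nonneg_poly n B \<Longrightarrow>
    (\<lambda>i j. A i j + A' i j) \<in> nonneg_poly n B"

locale psd_matrix =
  fixes n :: nat and B :: "nat \<Rightarrow> nat \<Rightarrow> real"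
  assumes zero_B: "zero_outside n B" and sym_B: "sym_mat n B"
    and nonneg_B: "\<And>z. 0 \<le> bilin n B z z"
begin

lemma zero_outside_mat_pow: "zero_outside n (mat_pow n B l)"
  by (induction l) (auto simp: zero_outside_id_mat zero_B zero_outside_mat_mult)

lemma mat_pow_add: "mat_mult n (mat_pow n B i) (mat_pow n B j) = mat_pow n B (i + j)"
  by (induction i) (auto simp: mat_mult_id_left zero_outside_mat_pow mat_mult_assoc)

lemma mat_pow_1: "mat_pow n B 1 = B"
  using mat_mult_id_right[OF zero_B] by simp

lemma sym_mat_mat_pow: "sym_mat n (mat_pow n B l)"
proof (induction l)
  case 0
  show ?case by (simp add: sym_mat_id_mat)
next
  case (Suc l)
  have "mat_pow n B (Suc l) = mat_mult n (mat_pow n B l) B"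
    using mat_pow_add[of l 1] mat_pow_1 by simp
  then show ?case
    using mat_mult_transpose[OF sym_B Suc.IH] by (auto simp: sym_mat_def)
qed

lemma mat_pow_nonneg: "0 \<le> bilin n (mat_pow n B l) z z"
proof -
  obtain j r where l: "l = 2*j + r" and r: "r = 0 \<or> r = 1"
    by (metis odd_two_times_div_two_succ dvd_mult_div_cancel add_0_right
        even_iff_mod_2_eq_zero mod2_eq_if)
  have "mat_pow n B l = mat_mult n (mat_pow n B j) (mat_mult n (mat_pow n B r) (mat_pow n B j))"
    using l by (simp add: mat_pow_add add_ac mult_2)
  then have "bilin n (mat_pow n B l) z z
      = bilin n (mat_pow n B r) (mat_vec n (mat_pow n B j) z) (mat_vec n (mat_pow n B j) z)"
    using bilin_sandwich[OF sym_mat_mat_pow] by simp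
  also have "0 \<le> \<dots>"
    using r nonneg_B mat_pow_1 by (auto simp: bilin_id_mat dot_self sqnorm_nonneg)
  finally show ?thesis .
qed

lemma nonneg_poly_sym: "A \<in> nonneg_poly n B \<Longrightarrow> sym_mat n A"
  by (induction rule: nonneg_poly.induct) (auto simp: sym_mat_mat_pow sym_mat_add sym_mat_scale)

lemma nonneg_poly_nonneg: "A \<in> nonneg_poly n B \<Longrightarrow> 0 \<le> bilin n A z z"
  by (induction rule: nonneg_poly.induct) (auto simp: mat_pow_nonneg bilin_add_mat bilin_scale_mat)

lemma nonneg_poly_mult_pow:
  "A \<in> nonneg_poly n B \<Longrightarrow> mat_mult n (mat_pow n B l) A \<in> nonneg_poly n B"
  by (induction rule: nonneg_poly.induct)
     (auto simp: mat_pow_add mat_mult_scale_right mat_mult_add_right intro: nonneg_poly.intros)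

lemma nonneg_poly_mult:
  "A \<in> nonneg_poly n B \<Longrightarrow> A' \<in> nonneg_poly n B \<Longrightarrow> mat_mult n A A' \<in> nonneg_poly n B"
  by (induction rule: nonneg_poly.induct)
     (auto simp: nonneg_poly_mult_pow mat_mult_scale_left mat_mult_add_left intro: nonneg_poly.intros)

lemma nonneg_poly_commute_pow:
  "A \<in> nonneg_poly n B \<Longrightarrow> mat_mult n (mat_pow n B l) A = mat_mult n A (mat_pow n B l)"
  by (induction rule: nonneg_poly.induct)
     (auto simp: mat_pow_add mat_mult_scale_right mat_mult_add_right mat_mult_scale_left
       mat_mult_add_left add.commute)

lemma nonneg_poly_commute:
  "A \<in> nonneg_poly n B \<Longrightarrow> A' \<in> nonneg_poly n B \<Longrightarrow> mat_mult n A A' = mat_mult n A' A"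
  by (induction rule: nonneg_poly.induct)
     (auto simp: nonneg_poly_commute_pow mat_mult_scale_right mat_mult_add_right
       mat_mult_scale_left mat_mult_add_left)

lemma self_nonneg_poly: "B \<in> nonneg_poly n B"
  using nonneg_poly_pow[of n B 1] mat_pow_1 by simp

end

definition unit_vec :: "nat \<Rightarrow> nat \<Rightarrow> real" where
  "unit_vec i = (\<lambda>l. if l = i then 1 else 0)"

lemma bilin_unit_vec:
  assumes "i < n" "j < n" shows "bilin n A (unit_vec i) (unit_vec j) = A i j"
proof -
  have "bilin n A (unit_vec i) (unit_vec j)
      = (\<Sum>a<n. if a = i then (\<Sum>b<n. if b = j then A i j else 0) else 0)"
    unfolding bilin_def unit_vec_def by (intro sum.cong refl) (simp add: if_distrib cong: if_cong)
  then show ?thesis using assms by simp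
qed

lemma entry_polarization:
  assumes "sym_mat n A" "i < n" "j < n"
  shows "A i j = (bilin n A (\<lambda>l. unit_vec i l + unit_vec j l) (\<lambda>l. unit_vec i l + unit_vec j l)
                 - bilin n A (\<lambda>l. unit_vec i l - unit_vec j l) (\<lambda>l. unit_vec i l - unit_vec j l)) / 4"
  using bilin_unit_vec[OF assms(2,3), of A] bilin_unit_vec[OF assms(3,2), of A] assms
  unfolding sym_mat_def
  by (simp add: bilin_add_left bilin_add_right bilin_diff_left bilin_diff_right)

lemma bilin_le_entry_sum: "bilin n A z z \<le> (\<Sum>i<n. \<Sum>j<n. \<bar>A i j\<bar>) * sqnorm n z"
proof -
  have "bilin n A z z \<le> (\<Sum>i<n. \<Sum>j<n. \<bar>A i j\<bar> * sqnorm n z)"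
    unfolding bilin_def
  proof (intro sum_mono)
    fix i j assume "i \<in> {..<n}" "j \<in> {..<n}"
    then have "(z i)\<^sup>2 \<le> sqnorm n z" "(z j)\<^sup>2 \<le> sqnorm n z"
      unfolding sqnorm_def by (auto intro: member_le_sum)
    moreover have "\<bar>z i\<bar> * \<bar>z j\<bar> \<le> ((z i)\<^sup>2 + (z j)\<^sup>2) / 2"
      using sum_squares_bound[of "\<bar>z i\<bar>" "\<bar>z j\<bar>"] by (simp add: power2_eq_square)
    ultimately have "\<bar>A i j\<bar> * (\<bar>z i\<bar> * \<bar>z j\<bar>) \<le> \<bar>A i j\<bar> * sqnorm n z"
      by (intro mult_left_mono) auto
    moreover have "z i * A i j * z j \<le> \<bar>A i j\<bar> * (\<bar>z i\<bar> * \<bar>z j\<bar>)"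
      by (metis abs_ge_self abs_mult mult.commute mult.left_commute)
    ultimately show "z i * A i j * z j \<le> \<bar>A i j\<bar> * sqnorm n z" by linarith
  qed
  also have "\<dots> = (\<Sum>i<n. \<Sum>j<n. \<bar>A i j\<bar>) * sqnorm n z" by (simp add: sum_distrib_right)
  finally show ?thesis .
qed

primrec heron :: "nat \<Rightarrow> (nat \<Rightarrow> nat \<Rightarrow> real) \<Rightarrow> nat \<Rightarrow> (nat \<Rightarrow> nat \<Rightarrow> real)" where
  "heron n B 0 = (\<lambda>i j. 0)"
| "heron n B (Suc k) = (\<lambda>i j. (1/2) * (B i j + mat_mult n (heron n B k) (heron n B k) i j))"

locale heron_setting = psd_matrix +
  assumes le_B: "\<And>z. bilin n B z z \<le> sqnorm n z"
begin

lemma heron_nonneg_poly: "heron n B k \<in> nonneg_poly n B"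
proof (induction k)
  case 0
  have "(\<lambda>i j. 0 * mat_pow n B 0 i j) \<in> nonneg_poly n B"
    by (intro nonneg_poly_scale nonneg_poly_pow) auto
  then show ?case by simp
next
  case (Suc k)
  then have "mat_mult n (heron n B k) (heron n B k) \<in> nonneg_poly n B"
    by (intro nonneg_poly_mult)
  then have "(\<lambda>i j. (1/2) * (B i j + mat_mult n (heron n B k) (heron n B k) i j)) \<in> nonneg_poly n B"
    by (intro nonneg_poly_scale nonneg_poly_add self_nonneg_poly) auto
  then show ?case by simp
qed

text \<open>
  Since the iterates commute, \<open>L(k+2) - L(k+1) = (L(k+1) - L(k)) (L(k+1) + L(k)) / 2\<close>.
\<close>

lemma heron_increment_nonneg_poly:
  "(\<lambda>i j. heron n B (Suc k) i j - heron n B k i j) \<in> nonneg_poly n B"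
proof (induction k)
  case 0
  have "(\<lambda>i j. (1/2) * B i j) \<in> nonneg_poly n B"
    by (intro nonneg_poly_scale self_nonneg_poly) auto
  then show ?case by (simp add: mat_mult_def)
next
  case (Suc k)
  let ?L1 = "heron n B (Suc k)" and ?L0 = "heron n B k"
  have comm: "mat_mult n ?L1 ?L0 i j = mat_mult n ?L0 ?L1 i j" for i j
    using nonneg_poly_commute[OF heron_nonneg_poly heron_nonneg_poly] by metis
  have "mat_mult n (\<lambda>i j. ?L1 i j - ?L0 i j) (\<lambda>i j. ?L1 i j + ?L0 i j) \<in> nonneg_poly n B"
    by (intro nonneg_poly_mult Suc nonneg_poly_add heron_nonneg_poly)
  then have "(\<lambda>i j. (1/2) * mat_mult n (\<lambda>i j. ?L1 i j - ?L0 i j) (\<lambda>i j. ?L1 i j + ?L0 i j) i j)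
      \<in> nonneg_poly n B"
    by (intro nonneg_poly_scale) auto
  also have "(\<lambda>i j. (1/2) * mat_mult n (\<lambda>i j. ?L1 i j - ?L0 i j) (\<lambda>i j. ?L1 i j + ?L0 i j) i j)
      = (\<lambda>i j. heron n B (Suc (Suc k)) i j - ?L1 i j)"
  proof (intro ext)
    fix i j
    show "(1/2) * mat_mult n (\<lambda>i j. ?L1 i j - ?L0 i j) (\<lambda>i j. ?L1 i j + ?L0 i j) i j
      = heron n B (Suc (Suc k)) i j - ?L1 i j"
      unfolding heron.simps(2)[of n B "Suc k"] mat_mult_diff_left mat_mult_add_right
      by (subst (3) heron.simps(2)[of n B k]) (use comm[of i j] in \<open>simp add: algebra_simps\<close>)
  qed
  finally show ?case .
qed

lemma heron_sym: "sym_mat n (heron n B k)"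
  by (rule nonneg_poly_sym[OF heron_nonneg_poly])

lemma heron_nonneg: "0 \<le> bilin n (heron n B k) z z"
  by (rule nonneg_poly_nonneg[OF heron_nonneg_poly])

lemma heron_le_sqnorm: "bilin n (heron n B k) z z \<le> sqnorm n z"
proof (induction k arbitrary: z)
  case 0
  show ?case by (simp add: bilin_def sqnorm_nonneg)
next
  case (Suc k)
  let ?L = "heron n B k"
  have "bilin n (mat_mult n ?L ?L) z z = sqnorm n (mat_vec n ?L z)"
    by (simp add: bilin_eq_dot_mat_vec mat_vec_mat_mult dot_mat_vec_sym[OF heron_sym] dot_self)
  also have "\<dots> \<le> sqnorm n z"
    by (rule psd_contraction[OF heron_sym heron_nonneg Suc.IH])
  finally have "bilin n (mat_mult n ?L ?L) z z \<le> sqnorm n z" .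
  moreover have "bilin n (heron n B (Suc k)) z z
      = (1/2) * (bilin n B z z + bilin n (mat_mult n ?L ?L) z z)"
    unfolding heron.simps(2)[of n B k] bilin_scale_mat bilin_add_mat ..
  ultimately show ?case using le_B[of z] by (simp del: heron.simps)
qed

lemma heron_bilin_convergent: "convergent (\<lambda>k. bilin n (heron n B k) z z)"
proof -
  have "incseq (\<lambda>k. bilin n (heron n B k) z z)"
  proof (rule incseq_SucI)
    fix k
    show "bilin n (heron n B k) z z \<le> bilin n (heron n B (Suc k)) z z"
      using nonneg_poly_nonneg[OF heron_increment_nonneg_poly[of k], of z]
      unfolding bilin_diff_mat by (simp del: heron.simps)
  qed
  moreover have "bdd_above (range (\<lambda>k. bilin n (heron n B k) z z))"
    using heron_le_sqnorm by (intro bdd_aboveI2)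
  ultimately show ?thesis by (intro convergentI[OF LIMSEQ_incseq_SUP])
qed

lemma heron_entry_convergent:
  assumes "i < n" "j < n" shows "convergent (\<lambda>k. heron n B k i j)"
proof -
  define f where "f = (\<lambda>k. bilin n (heron n B k) (\<lambda>l. unit_vec i l + unit_vec j l)
                                                (\<lambda>l. unit_vec i l + unit_vec j l))"
  define g where "g = (\<lambda>k. bilin n (heron n B k) (\<lambda>l. unit_vec i l - unit_vec j l)
                                                (\<lambda>l. unit_vec i l - unit_vec j l))"
  have "(\<lambda>k. heron n B k i j) = (\<lambda>k. (f k - g k) / 4)"
    unfolding f_def g_def using heron_sym assms by (intro ext entry_polarization)
  moreover have "(\<lambda>k. (f k - g k) / 4) \<longlonglongrightarrow> (lim f - lim g) / 4"
    unfolding f_def g_def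
    by (intro tendsto_intros convergent_LIMSEQ_iff[THEN iffD1] heron_bilin_convergent) simp
  ultimately show ?thesis by (metis convergentI)
qed

definition heron_lim :: "nat \<Rightarrow> nat \<Rightarrow> real" where
  "heron_lim = (\<lambda>i j. if i < n \<and> j < n then lim (\<lambda>k. heron n B k i j) else 0)"

lemma heron_lim_tendsto: "i < n \<Longrightarrow> j < n \<Longrightarrow> (\<lambda>k. heron n B k i j) \<longlonglongrightarrow> heron_lim i j"
  using heron_entry_convergent by (simp add: heron_lim_def convergent_LIMSEQ_iff)

lemma heron_lim_zero_outside: "zero_outside n heron_lim"
  by (simp add: zero_outside_def heron_lim_def)

lemma heron_lim_sym: "sym_mat n heron_lim"
  using heron_sym unfolding sym_mat_def heron_lim_def by auto

lemma heron_lim_le_sqnorm: "bilin n heron_lim z z \<le> sqnorm n z"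
proof (rule LIMSEQ_le_const2)
  show "(\<lambda>k. bilin n (heron n B k) z z) \<longlonglongrightarrow> bilin n heron_lim z z"
    unfolding bilin_def by (intro tendsto_intros heron_lim_tendsto) auto
qed (use heron_le_sqnorm in auto)

lemma heron_lim_fixpoint:
  assumes "i < n" "j < n"
  shows "heron_lim i j = (1/2) * (B i j + mat_mult n heron_lim heron_lim i j)"
proof (rule LIMSEQ_unique)
  show "(\<lambda>k. heron n B (Suc k) i j) \<longlonglongrightarrow> heron_lim i j"
    using heron_lim_tendsto[OF assms] by (rule LIMSEQ_Suc)
  show "(\<lambda>k. heron n B (Suc k) i j) \<longlonglongrightarrow> (1/2) * (B i j + mat_mult n heron_lim heron_lim i j)"
    unfolding heron.simps mat_mult_def using assms
    by (intro tendsto_intros heron_lim_tendsto) auto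
qed

end

lemma heron_setting_scaled_complement:
  assumes "psd n \<rho>"
  defines "c \<equiv> 1 + (\<Sum>i<n. \<Sum>j<n. \<bar>\<rho> i j\<bar>)"
  defines "B \<equiv> \<lambda>i j. id_mat n i j - (1/c) * (if i < n \<and> j < n then \<rho> i j else 0)"
  shows "heron_setting n B"
proof unfold_locales
  have c1: "1 \<le> c" unfolding c_def by (simp add: sum_nonneg)
  have bilin_B: "bilin n B z z = sqnorm n z - (1/c) * bilin n \<rho> z z" for z
    by (simp add: B_def bilin_diff_mat bilin_scale_mat bilin_id_mat dot_self)
      (simp add: bilin_def sum_divide_distrib)
  show "zero_outside n B" "sym_mat n B"
    using assms(1) by (auto simp: B_def zero_outside_def sym_mat_def id_mat_def psd_iff_bilin)
  fix z
  have "bilin n \<rho> z z \<le> (c - 1) * sqnorm n z"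
    using bilin_le_entry_sum[of n \<rho> z] by (simp add: c_def)
  then have "(1/c) * bilin n \<rho> z z \<le> (1/c) * ((c - 1) * sqnorm n z)"
    using c1 by (intro mult_left_mono) auto
  also have "\<dots> \<le> sqnorm n z" using c1 sqnorm_nonneg[of n z] by (simp add: field_simps)
  finally show "0 \<le> bilin n B z z" using bilin_B by simp
  show "bilin n B z z \<le> sqnorm n z"
    using bilin_B assms(1) c1 by (simp add: psd_iff_bilin)
qed

text \<open>
  With \<open>B = I - \<rho>/c\<close> and \<open>(I - L)\<^sup>2 = I - B\<close> from the Heron iteration, \<open>\<surd>c (I - L)\<close> is a
  square root of \<open>\<rho>\<close>.
\<close>

theorem psd_sqrt_exists:
  assumes "psd n \<rho>"
  shows "\<exists>S. psd n S \<and> (\<forall>i<n. \<forall>j<n. mat_mult n S S i j = \<rho> i j) \<and> zero_outside n S"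
proof -
  define c where "c = 1 + (\<Sum>i<n. \<Sum>j<n. \<bar>\<rho> i j\<bar>)"
  define B where "B = (\<lambda>i j. id_mat n i j - (1/c) * (if i < n \<and> j < n then \<rho> i j else 0))"
  have c1: "1 \<le> c" unfolding c_def by (simp add: sum_nonneg)
  interpret heron_setting n B
    using heron_setting_scaled_complement[OF assms] unfolding c_def B_def .
  define L where "L = heron_lim"
  define S where "S = (\<lambda>i j. sqrt c * (id_mat n i j - L i j))"
  have L_zero: "zero_outside n L" unfolding L_def by (rule heron_lim_zero_outside)
  have "zero_outside n S"
    unfolding S_def by (intro zero_outside_scale zero_outside_diff zero_outside_id_mat L_zero)
  moreover have "sym_mat n S"
    unfolding S_def L_def by (intro sym_mat_scale sym_mat_diff sym_mat_id_mat heron_lim_sym)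
  moreover have "0 \<le> bilin n S z z" for z
    unfolding S_def L_def using heron_lim_le_sqnorm[of z] c1
    by (simp add: bilin_scale_mat bilin_diff_mat bilin_id_mat dot_self)
  moreover have "mat_mult n S S i j = \<rho> i j" if "i < n" "j < n" for i j
  proof -
    have "mat_mult n S S i j
        = c * mat_mult n (\<lambda>i j. id_mat n i j - L i j) (\<lambda>i j. id_mat n i j - L i j) i j"
      unfolding S_def mat_mult_scale_left mat_mult_scale_right using c1 by simp
    also have "\<dots> = c * (id_mat n i j - 2 * L i j + mat_mult n L L i j)"
      unfolding mat_mult_diff_left mat_mult_diff_right mat_mult_id_left[OF zero_outside_id_mat]
        mat_mult_id_left[OF L_zero] mat_mult_id_right[OF L_zero]
      by simp
    also have "\<dots> = \<rho> i j"
    proof -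
      have "c \<noteq> 0" using c1 by simp
      then show ?thesis
        using heron_lim_fixpoint[OF that] that by (simp add: L_def B_def field_simps)
    qed
    finally show ?thesis .
  qed
  ultimately show ?thesis by (auto simp: psd_iff_bilin)
qed

lemma trace_sandwich_rows:
  assumes "sym_mat n D"
  shows "(\<Sum>i<n. \<Sum>j<n. D i j * mat_mult n A D j i) = (\<Sum>i<n. bilin n A (\<lambda>l. D i l) (\<lambda>l. D i l))"
proof (intro sum.cong refl)
  fix i assume "i \<in> {..<n}"
  then show "(\<Sum>j<n. D i j * mat_mult n A D j i) = bilin n A (\<lambda>l. D i l) (\<lambda>l. D i l)"
    using assms unfolding mat_mult_def bilin_def sum_distrib_left sym_mat_def
    by (intro sum.cong refl) (auto simp: mult.assoc)
qed

lemma mat_mult_sym_column: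
  assumes "sym_mat n D" "l < n" "i < n"
  shows "mat_mult n A D l i = mat_vec n A (\<lambda>k. D i k) l"
  using assms unfolding mat_mult_def mat_vec_def sym_mat_def by (intro sum.cong refl) auto

lemma sym_mat_square_diag: "sym_mat n D \<Longrightarrow> i < n \<Longrightarrow> mat_mult n D D i i = (\<Sum>k<n. (D i k)\<^sup>2)"
  unfolding mat_mult_def sym_mat_def by (intro sum.cong refl) (auto simp: power2_eq_square)

text \<open>
  If \<open>S\<^sup>2 = T\<^sup>2\<close> and \<open>D = S - T\<close>, then \<open>SD + DT = 0\<close>, so \<open>tr(DSD) + tr(DTD) = 0\<close>; both
  traces are nonnegative, hence \<open>SD = TD = 0\<close> and \<open>D\<^sup>2 = 0\<close>.
\<close>

theorem psd_sqrt_unique: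
  assumes "psd n S" "psd n T" "zero_outside n S" "zero_outside n T"
    and eq: "\<forall>i<n. \<forall>j<n. mat_mult n S S i j = mat_mult n T T i j"
  shows "S = T"
proof -
  have sym_S: "sym_mat n S" and nonneg_S: "\<And>x. 0 \<le> bilin n S x x"
    and sym_T: "sym_mat n T" and nonneg_T: "\<And>x. 0 \<le> bilin n T x x"
    using assms(1,2) by (auto simp: psd_iff_bilin)
  define D where "D = (\<lambda>i j. S i j - T i j)"
  have sym_D: "sym_mat n D" unfolding D_def by (intro sym_mat_diff sym_S sym_T)
  have "(\<Sum>i<n. \<Sum>j<n. D i j * (mat_mult n S D j i + mat_mult n D T j i)) = 0"
    using eq by (simp add: D_def mat_mult_diff_left mat_mult_diff_right)
  moreover have "(\<Sum>i<n. \<Sum>j<n. D i j * mat_mult n D T j i)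
      = (\<Sum>i<n. \<Sum>j<n. D j i * mat_mult n T D i j)"
    using sym_D mat_mult_transpose[OF sym_D sym_T] by (intro sum.cong refl) (auto simp: sym_mat_def)
  ultimately have "(\<Sum>i<n. bilin n S (\<lambda>l. D i l) (\<lambda>l. D i l))
      + (\<Sum>i<n. bilin n T (\<lambda>l. D i l) (\<lambda>l. D i l)) = 0"
    by (simp add: distrib_left sum.distrib trace_sandwich_rows[OF sym_D, symmetric])
      (subst (asm) (2) sum.swap, simp)
  then have "bilin n S (\<lambda>l. D i l) (\<lambda>l. D i l) = 0" "bilin n T (\<lambda>l. D i l) (\<lambda>l. D i l) = 0"
    if "i < n" for i
    using that nonneg_S nonneg_T
    by (simp_all add: add_nonneg_eq_0_iff sum_nonneg sum_nonneg_eq_0_iff)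
  then have SD: "mat_mult n S D l i = 0" and TD: "mat_mult n T D l i = 0" if "l < n" "i < n" for l i
    using that by (simp_all add: mat_mult_sym_column[OF sym_D] psd_kernel sym_S sym_T nonneg_S nonneg_T)
  have "mat_mult n D D i i = 0" if "i < n" for i
  proof -
    have "mat_mult n D D i i = mat_mult n S D i i - mat_mult n T D i i"
      unfolding D_def mat_mult_diff_left by (simp add: D_def[symmetric])
    then show ?thesis using SD[OF that that] TD[OF that that] by simp
  qed
  then have "D i j = 0" if "i < n" "j < n" for i j
    using that by (simp add: sym_mat_square_diag[OF sym_D] sum_nonneg_eq_0_iff)
  then have "S i j = T i j" for i j
    using assms(3,4) unfolding zero_outside_def D_def by (cases "i < n \<and> j < n") auto
  then show ?thesis by (intro ext)
qed

theorem mat_sqrt_spec: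
  assumes "psd n \<rho>"
  shows "psd n (mat_sqrt n \<rho>)"
    and "\<And>i j. i < n \<Longrightarrow> j < n \<Longrightarrow> mat_mult n (mat_sqrt n \<rho>) (mat_sqrt n \<rho>) i j = \<rho> i j"
proof -
  let ?P = "\<lambda>S. psd n S \<and> (\<forall>i<n. \<forall>j<n. mat_mult n S S i j = \<rho> i j) \<and>
                (\<forall>i j. \<not> (i < n \<and> j < n) \<longrightarrow> S i j = 0)"
  have "\<exists>!S. ?P S"
  proof (rule ex_ex1I)
    show "\<exists>S. ?P S" using psd_sqrt_exists[OF assms] unfolding zero_outside_def by blast
    show "S = T" if "?P S" "?P T" for S T
      using that by (intro psd_sqrt_unique) (auto simp: zero_outside_def)
  qed
  then have "?P (mat_sqrt n \<rho>)" unfolding mat_sqrt_def by (rule theI')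
  then show "psd n (mat_sqrt n \<rho>)"
    and "\<And>i j. i < n \<Longrightarrow> j < n \<Longrightarrow> mat_mult n (mat_sqrt n \<rho>) (mat_sqrt n \<rho>) i j = \<rho> i j"
    by auto
qed

section \<open>Gaussian linear forms\<close>

lemma prob_space_gauss_vec: "prob_space (gauss_vec n)"
  unfolding gauss_vec_def by (intro prob_space_PiM prob_space_normal_density) simp

interpretation gauss: prob_space "gauss_vec n" for n
  by (rule prob_space_gauss_vec)

lemma gauss_component_measurable: "k < n \<Longrightarrow> (\<lambda>g. g k) \<in> borel_measurable (gauss_vec n)"
  unfolding gauss_vec_def by measurable

lemma dot_gauss_measurable [measurable]: "dot n a \<in> borel_measurable (gauss_vec n)"
  unfolding dot_def
  by (intro borel_measurable_sum borel_measurable_times borel_measurable_const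
      gauss_component_measurable) auto

lemma sgn_pm_measurable [measurable]: "sgn_pm \<in> borel_measurable borel"
  unfolding sgn_pm_def by measurable

lemma gauss_component_distributed:
  assumes "k < n"
  shows "distributed (gauss_vec n) lborel (\<lambda>g. g k) std_normal_density"
proof -
  have "distr (gauss_vec n) lborel (\<lambda>g. g k)
      = distr (gauss_vec n) (density lborel std_normal_density) (\<lambda>g. g k)"
    by (rule distr_cong) auto
  also have "\<dots> = density lborel std_normal_density"
    unfolding gauss_vec_def using assms by (intro distr_PiM_component prob_space_normal_density) auto
  finally show ?thesis
    unfolding distributed_def using gauss_component_measurable[OF assms] by auto
qed

lemma gauss_components_indep:
  assumes "0 < n"
  shows "gauss.indep_vars n (\<lambda>_. borel) (\<lambda>k g. g k) {..<n}"
proof (subst gauss.indep_vars_iff_distr_eq_PiM')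
  show "{..<n} \<noteq> {}" using assms by auto
  show "\<And>i. i \<in> {..<n} \<Longrightarrow> (\<lambda>g. g i) \<in> measurable (gauss_vec n) borel"
    using gauss_component_measurable by auto
  have "distr (gauss_vec n) (\<Pi>\<^sub>M i\<in>{..<n}. borel) (\<lambda>x. \<lambda>i\<in>{..<n}. x i)
      = distr (gauss_vec n) (\<Pi>\<^sub>M i\<in>{..<n}. borel) (\<lambda>x. x)"
    by (rule distr_cong) (simp_all add: gauss_vec_def space_PiM PiE_restrict)
  also have "\<dots> = gauss_vec n"
    unfolding gauss_vec_def by (rule distr_id2) (rule sets_PiM_cong, auto)
  also have "\<dots> = (\<Pi>\<^sub>M i\<in>{..<n}. distr (gauss_vec n) borel (\<lambda>x. x i))"
  proof -
    have "distr (gauss_vec n) borel (\<lambda>x. x i) = density lborel std_normal_density"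
      if "i \<in> {..<n}" for i
    proof -
      have "distr (gauss_vec n) borel (\<lambda>x. x i) = distr (gauss_vec n) lborel (\<lambda>x. x i)"
        by (rule distr_cong) simp_all
      also have "\<dots> = density lborel std_normal_density"
        using gauss_component_distributed[of i n] that unfolding distributed_def by simp
      finally show ?thesis .
    qed
    then show ?thesis unfolding gauss_vec_def by (intro PiM_cong) auto
  qed
  finally show "distr (gauss_vec n) (\<Pi>\<^sub>M i\<in>{..<n}. borel) (\<lambda>x. \<lambda>i\<in>{..<n}. x i)
      = (\<Pi>\<^sub>M i\<in>{..<n}. distr (gauss_vec n) borel (\<lambda>x. x i))" .
qed

lemma dot_self_nonneg: "0 \<le> dot n a a"
  by (simp add: dot_self sqnorm_nonneg)

lemma dot_eq_0_if_self_eq_0: "dot n a a = 0 \<Longrightarrow> dot n a g = 0"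
  unfolding dot_self using sqnorm_eq_0_imp by (auto simp: dot_def intro!: sum.neutral)

lemma dot_add_left: "dot n (\<lambda>k. a k + b k) g = dot n a g + dot n b g"
  unfolding dot_def by (simp add: algebra_simps sum.distrib)

lemma dot_diff_left: "dot n (\<lambda>k. a k - b k) g = dot n a g - dot n b g"
  unfolding dot_def by (simp add: algebra_simps sum_subtractf)

lemma dot_scale_left: "dot n (\<lambda>k. t * a k) g = t * dot n a g"
  unfolding dot_def by (simp add: sum_distrib_left algebra_simps)

lemma dot_gauss_distributed:
  assumes pos: "0 < dot n a a"
  shows "distributed (gauss_vec n) lborel (dot n a) (normal_density 0 (sqrt (dot n a a)))"
proof -
  define I where "I = {k. k < n \<and> a k \<noteq> 0}"
  have "finite I" "I \<subseteq> {..<n}" unfolding I_def by auto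
  have "I \<noteq> {}"
  proof
    assume "I = {}"
    then have "dot n a a = 0" unfolding dot_def I_def by (intro sum.neutral) auto
    then show False using pos by simp
  qed
  then have "0 < n" unfolding I_def by auto
  have indep: "gauss.indep_vars n (\<lambda>_. borel) (\<lambda>k g. a k * g k) I"
    by (rule gauss.indep_vars_compose2[OF gauss.indep_vars_subset[OF
          gauss_components_indep[OF \<open>0 < n\<close>] \<open>I \<subseteq> {..<n}\<close>]]) simp
  have "distributed (gauss_vec n) lborel (\<lambda>g. a k * g k) (normal_density 0 \<bar>a k\<bar>)"
    if "k \<in> I" for k
  proof -
    have "k < n" "a k \<noteq> 0" using that unfolding I_def by auto
    from gauss.normal_density_affine[OF gauss_component_distributed[OF this(1)] _ this(2), of 0]
    show ?thesis by simp
  qed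
  moreover have "0 < \<bar>a k\<bar>" if "k \<in> I" for k using that unfolding I_def by auto
  ultimately have "distributed (gauss_vec n) lborel (\<lambda>g. \<Sum>k\<in>I. a k * g k)
      (normal_density (\<Sum>k\<in>I. 0) (sqrt (\<Sum>k\<in>I. \<bar>a k\<bar>\<^sup>2)))"
    by (intro gauss.sum_indep_normal[OF \<open>finite I\<close> \<open>I \<noteq> {}\<close> indep])
  moreover have "(\<lambda>g. \<Sum>k\<in>I. a k * g k) = dot n a"
    unfolding dot_def by (intro ext sum.mono_neutral_left) (auto simp: I_def)
  moreover have "(\<Sum>k\<in>I. \<bar>a k\<bar>\<^sup>2) = dot n a a"
    unfolding dot_def by (intro sum.mono_neutral_cong_left) (auto simp: I_def power2_eq_square)
  ultimately show ?thesis by simp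
qed

lemma gauss_dot_second_moment:
  "has_bochner_integral (gauss_vec n) (\<lambda>g. (dot n a g)\<^sup>2) (dot n a a)"
proof (cases "dot n a a = 0")
  case True
  then show ?thesis using dot_eq_0_if_self_eq_0[OF True] by (simp add: has_bochner_integral_zero)
next
  case False
  then have pos: "0 < dot n a a" using dot_self_nonneg[of n a] by simp
  let ?s = "sqrt (dot n a a)"
  have "0 < ?s" using pos by simp
  note D = dot_gauss_distributed[OF pos]
  have "integrable lborel (\<lambda>x. normal_density 0 ?s x * x\<^sup>2)"
    using integrable_normal_moment[OF \<open>0 < ?s\<close>, of 0 2] by simp
  then have "integrable (gauss_vec n) (\<lambda>g. (dot n a g)\<^sup>2)"
    using distributed_integrable[OF D, of "\<lambda>x. x\<^sup>2"] by simp
  moreover have "(\<integral>g. (dot n a g)\<^sup>2 \<partial>gauss_vec n) = (\<integral>x. normal_density 0 ?s x * x\<^sup>2 \<partial>lborel)"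
    using distributed_integral[OF D, of "\<lambda>x. x\<^sup>2"] by simp
  moreover have "\<dots> = fact 2 / ((2 / ?s\<^sup>2) ^ 1 * fact 1)"
    using integral_normal_moment_even[OF \<open>0 < ?s\<close>, of 0 1] by simp
  moreover have "\<dots> = dot n a a" using pos by (simp add: fact_numeral)
  ultimately show ?thesis by (simp add: has_bochner_integral_iff)
qed

lemma gauss_dot_abs_moment:
  "has_bochner_integral (gauss_vec n) (\<lambda>g. \<bar>dot n a g\<bar>) (sqrt (2/pi) * sqrt (dot n a a))"
proof (cases "dot n a a = 0")
  case True
  then show ?thesis using dot_eq_0_if_self_eq_0[OF True] by (simp add: has_bochner_integral_zero)
next
  case False
  then have pos: "0 < dot n a a" using dot_self_nonneg[of n a] by simp
  let ?s = "sqrt (dot n a a)"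
  have "0 < ?s" using pos by simp
  note D = dot_gauss_distributed[OF pos]
  have "integrable lborel (\<lambda>x. normal_density 0 ?s x * \<bar>x\<bar>)"
    using integrable_normal_moment_abs[OF \<open>0 < ?s\<close>, of 0 1] by simp
  then have "integrable (gauss_vec n) (\<lambda>g. \<bar>dot n a g\<bar>)"
    using distributed_integrable[OF D, of "\<lambda>x. \<bar>x\<bar>"] by simp
  moreover have "(\<integral>g. \<bar>dot n a g\<bar> \<partial>gauss_vec n) = (\<integral>x. normal_density 0 ?s x * \<bar>x\<bar> \<partial>lborel)"
    using distributed_integral[OF D, of "\<lambda>x. \<bar>x\<bar>"] by simp
  moreover have "\<dots> = sqrt (2/pi) * ?s"
    using integral_normal_moment_abs_odd[OF \<open>0 < ?s\<close>, of 0 0] by simp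
  ultimately show ?thesis by (simp add: has_bochner_integral_iff)
qed

lemma gauss_dot_covariance:
  "has_bochner_integral (gauss_vec n) (\<lambda>g. dot n a g * dot n b g) (dot n a b)"
proof -
  let ?p = "\<lambda>k. a k + b k" and ?m = "\<lambda>k. a k - b k"
  have "(\<lambda>g. dot n a g * dot n b g) = (\<lambda>g. ((dot n ?p g)\<^sup>2 - (dot n ?m g)\<^sup>2) / 4)"
    unfolding dot_add_left dot_diff_left by (simp add: power2_eq_square algebra_simps)
  moreover have "dot n a b = (dot n ?p ?p - dot n ?m ?m) / 4"
    unfolding dot_def by (simp add: algebra_simps sum.distrib sum_subtractf sum_distrib_left)
  ultimately show ?thesis
    by (simp only:) (intro has_bochner_integral_divide_zero has_bochner_integral_diff
        gauss_dot_second_moment)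
qed

lemma le_of_le_plus_pos_multiple:
  fixes F P Q :: real
  assumes "\<And>t. 0 < t \<Longrightarrow> F \<le> P + t * Q"
  shows "F \<le> P"
proof (rule field_le_epsilon)
  fix e :: real assume "0 < e"
  define t where "t = e / (\<bar>Q\<bar> + 1)"
  have "0 < t" unfolding t_def using \<open>0 < e\<close> by (simp add: add_pos_nonneg)
  have "t * Q \<le> t * \<bar>Q\<bar>" using \<open>0 < t\<close> by (simp add: mult_left_mono)
  also have "\<dots> \<le> t * (\<bar>Q\<bar> + 1)" using \<open>0 < t\<close> by simp
  also have "\<dots> = e" unfolding t_def by (simp add: add_pos_nonneg)
  finally show "F \<le> P + e" using assms[OF \<open>0 < t\<close>] by linarith
qed

lemma eq_of_le_quadratic_perturbation:
  fixes F P Q :: real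
  assumes le: "\<And>t. t * F \<le> t * P + t\<^sup>2 * Q"
  shows "F = P"
proof (rule antisym)
  show "F \<le> P"
  proof (rule le_of_le_plus_pos_multiple)
    fix t :: real assume "0 < t"
    have "t * F \<le> t * (P + t * Q)" using le[of t] by (simp add: power2_eq_square algebra_simps)
    then show "F \<le> P + t * Q" using \<open>0 < t\<close> by (rule mult_left_le_imp_le)
  qed
  show "P \<le> F"
  proof (rule le_of_le_plus_pos_multiple)
    fix t :: real assume "0 < t"
    have "t * P \<le> t * (F + t * Q)" using le[of "-t"] by (simp add: power2_eq_square algebra_simps)
    then show "P \<le> F + t * Q" using \<open>0 < t\<close> by (rule mult_left_le_imp_le)
  qed
qed

lemma abs_add_ge_sgn_pm: "\<bar>y\<bar> + t * (sgn_pm y * w) \<le> \<bar>y + t * w\<bar>"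
  unfolding sgn_pm_def by (cases "y < 0") (auto simp: algebra_simps abs_if split: if_splits)

lemma abs_sgn_pm [simp]: "\<bar>sgn_pm y\<bar> = 1"
  unfolding sgn_pm_def by simp

lemma integrable_sgn_pm_dot_mult_dot:
  "integrable (gauss_vec n) (\<lambda>g. sgn_pm (dot n u g) * dot n v g)"
proof (rule Bochner_Integration.integrable_bound)
  show "integrable (gauss_vec n) (\<lambda>g. \<bar>dot n v g\<bar>)"
    by (rule integrable.intros[OF gauss_dot_abs_moment])
qed (auto simp: abs_mult)

text \<open>
  Since \<open>\<bar>y + t w\<bar> \<ge> \<bar>y\<bar> + t sgn(y) w\<close>, the expectation \<open>F\<close> satisfies
  \<open>\<surd>(2/\<pi>) + t F \<le> E\<bar>\<langle>u + t v, g\<rangle>\<bar> = \<surd>(2/\<pi>) \<parallel>u + t v\<parallel>\<close> for every \<open>t\<close>; comparing first-order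
  terms at \<open>t = 0\<close> identifies \<open>F\<close>.
\<close>

lemma gauss_sgn_dot_correlation:
  assumes unit: "dot n u u = 1"
  shows "(\<integral>g. sgn_pm (dot n u g) * dot n v g \<partial>gauss_vec n) = sqrt (2/pi) * dot n u v"
proof -
  define F where "F = (\<integral>g. sgn_pm (dot n u g) * dot n v g \<partial>gauss_vec n)"
  let ?c = "sqrt (2/pi)"
  have "t * F \<le> t * (?c * dot n u v) + t\<^sup>2 * (?c * dot n v v / 2)" for t
  proof -
    let ?w = "\<lambda>k. u k + t * v k"
    have abs_u: "has_bochner_integral (gauss_vec n) (\<lambda>g. \<bar>dot n u g\<bar>) ?c"
      using gauss_dot_abs_moment[of n u] unit by simp
    have sgn_int: "integrable (gauss_vec n) (\<lambda>g. t * (sgn_pm (dot n u g) * dot n v g))"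
      using integrable_sgn_pm_dot_mult_dot by simp
    have "?c + t * F = (\<integral>g. \<bar>dot n u g\<bar> + t * (sgn_pm (dot n u g) * dot n v g) \<partial>gauss_vec n)"
      using abs_u sgn_int unfolding F_def has_bochner_integral_iff by simp
    also have "\<dots> \<le> (\<integral>g. \<bar>dot n ?w g\<bar> \<partial>gauss_vec n)"
      using abs_u sgn_int integrable.intros[OF gauss_dot_abs_moment[of n ?w]]
      unfolding has_bochner_integral_iff
      by (intro integral_mono) (auto simp: dot_add_left dot_scale_left abs_add_ge_sgn_pm)
    also have "\<dots> = ?c * sqrt (dot n ?w ?w)"
      using gauss_dot_abs_moment by (rule has_bochner_integral_integral_eq)
    also have "\<dots> \<le> ?c * ((1 + dot n ?w ?w) / 2)"
      using arith_geo_mean_sqrt[of 1 "dot n ?w ?w"] dot_self_nonneg[of n ?w]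
      by (intro mult_left_mono) auto
    also have "dot n ?w ?w = 1 + 2 * t * dot n u v + t\<^sup>2 * dot n v v"
      using unit dot_commute[of n u v] unfolding dot_def
      by (simp add: algebra_simps sum.distrib sum_distrib_left power2_eq_square)
    finally show ?thesis by (simp add: algebra_simps)
  qed
  then show ?thesis unfolding F_def by (rule eq_of_le_quadratic_perturbation)
qed

section \<open>Operator norm bounds\<close>

lemma sqnorm_eq_L2_set: "sqnorm n x = (L2_set x {..<n})\<^sup>2"
  by (simp add: sqnorm_def L2_set_def sum_nonneg)

lemma op_norm_bdd_above:
  "bdd_above {sqrt (\<Sum>i<n. (\<Sum>j<n. A i j * x j)\<^sup>2) | x :: nat \<Rightarrow> real. (\<Sum>j<n. (x j)\<^sup>2) \<le> 1}"
proof (rule bdd_aboveI)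
  fix y assume "y \<in> {sqrt (\<Sum>i<n. (\<Sum>j<n. A i j * x j)\<^sup>2) | x :: nat \<Rightarrow> real. (\<Sum>j<n. (x j)\<^sup>2) \<le> 1}"
  then obtain z where y: "y = L2_set (\<lambda>i. \<Sum>j<n. A i j * z j) {..<n}"
    and z: "(\<Sum>j<n. (z j)\<^sup>2) \<le> 1"
    unfolding L2_set_def by blast
  have "\<bar>z j\<bar> \<le> 1" if "j < n" for j
  proof -
    have "(z j)\<^sup>2 \<le> (\<Sum>j<n. (z j)\<^sup>2)" using that by (intro member_le_sum) auto
    then show ?thesis using z by (metis abs_square_le_1 order_trans)
  qed
  then have row: "\<bar>\<Sum>j<n. A i j * z j\<bar> \<le> (\<Sum>j<n. \<bar>A i j\<bar>)" for i
    by (intro order_trans[OF sum_abs] sum_mono) (simp add: abs_mult mult_left_le)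
  have "y \<le> (\<Sum>i<n. \<bar>\<Sum>j<n. A i j * z j\<bar>)" unfolding y by (rule L2_set_le_sum_abs)
  also have "\<dots> \<le> (\<Sum>i<n. \<Sum>j<n. \<bar>A i j\<bar>)" by (intro sum_mono row)
  finally show "y \<le> (\<Sum>i<n. \<Sum>j<n. \<bar>A i j\<bar>)" .
qed

lemma op_norm_nonneg: "0 \<le> op_norm n A"
proof -
  have "sqrt (\<Sum>i<n. (\<Sum>j<n. A i j * 0)\<^sup>2) \<le> op_norm n A"
    unfolding op_norm_def
    by (intro cSup_upper op_norm_bdd_above CollectI exI[of _ "\<lambda>j. 0"]) simp
  then show ?thesis by simp
qed

lemma op_norm_mat_vec:
  "sqrt (sqnorm n (mat_vec n A x)) \<le> op_norm n A * sqrt (sqnorm n x)"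
proof (cases "sqnorm n x = 0")
  case True
  then have "mat_vec n A x i = 0" for i
    using sqnorm_eq_0_imp unfolding mat_vec_def by (auto intro!: sum.neutral)
  then have "sqnorm n (mat_vec n A x) = 0" by (simp add: sqnorm_def)
  then show ?thesis by (simp add: op_norm_nonneg sqnorm_nonneg)
next
  case False
  define s where "s = sqrt (sqnorm n x)"
  have "0 < s" unfolding s_def using False sqnorm_nonneg[of n x] by simp
  define y where "y = (\<lambda>j. x j / s)"
  have "(\<Sum>j<n. (y j)\<^sup>2) = sqnorm n x / s\<^sup>2"
    unfolding y_def sqnorm_def by (simp add: power_divide sum_divide_distrib)
  also have "\<dots> = 1" using \<open>0 < s\<close> sqnorm_nonneg[of n x] unfolding s_def by simp
  finally have "sqrt (\<Sum>i<n. (\<Sum>j<n. A i j * y j)\<^sup>2) \<le> op_norm n A"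
    unfolding op_norm_def by (intro cSup_upper op_norm_bdd_above CollectI exI[of _ y]) simp
  also have "(\<Sum>i<n. (\<Sum>j<n. A i j * y j)\<^sup>2) = sqnorm n (mat_vec n A x) / s\<^sup>2"
    unfolding y_def mat_vec_def sqnorm_def
    by (simp add: sum_divide_distrib[symmetric] power_divide times_divide_eq_right)
  finally show ?thesis
    using \<open>0 < s\<close> by (simp add: real_sqrt_divide s_def divide_le_eq)
qed

lemma bilin_abs_le_op_norm:
  "\<bar>bilin n A u v\<bar> \<le> op_norm n A * sqrt (sqnorm n u) * sqrt (sqnorm n v)"
proof -
  have "\<bar>bilin n A u v\<bar> \<le> (\<Sum>i<n. \<bar>u i\<bar> * \<bar>mat_vec n A v i\<bar>)"
    unfolding bilin_eq_dot_mat_vec dot_def by (rule order_trans[OF sum_abs]) (simp add: abs_mult)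
  also have "\<dots> \<le> L2_set u {..<n} * L2_set (mat_vec n A v) {..<n}"
    by (rule L2_set_mult_ineq)
  also have "\<dots> = sqrt (sqnorm n u) * sqrt (sqnorm n (mat_vec n A v))"
    by (simp add: sqnorm_eq_L2_set L2_set_nonneg)
  also have "\<dots> \<le> sqrt (sqnorm n u) * (op_norm n A * sqrt (sqnorm n v))"
    by (intro mult_left_mono op_norm_mat_vec) (simp add: sqnorm_nonneg)
  finally show ?thesis by (simp add: mult_ac)
qed

lemma bilin_abs_le_of_op_norm_le_1:
  assumes "op_norm n A \<le> 1"
  shows "\<bar>bilin n A u v\<bar> \<le> sqrt (sqnorm n u) * sqrt (sqnorm n v)"
proof -
  have "\<bar>bilin n A u v\<bar> \<le> op_norm n A * (sqrt (sqnorm n u) * sqrt (sqnorm n v))"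
    using bilin_abs_le_op_norm by (simp add: mult.assoc)
  also have "\<dots> \<le> sqrt (sqnorm n u) * sqrt (sqnorm n v)"
    using assms by (intro mult_left_le_one_le) (auto simp: op_norm_nonneg sqnorm_nonneg)
  finally show ?thesis .
qed

lemma sum_mult_dot_rows_le:
  assumes "op_norm n A \<le> 1"
  shows "\<bar>\<Sum>i<n. \<Sum>j<n. A i j * dot n (a i) (b j)\<bar>
         \<le> sqrt (\<Sum>i<n. dot n (a i) (a i)) * sqrt (\<Sum>j<n. dot n (b j) (b j))"
proof -
  define col_a where "col_a = (\<lambda>k i. a i k)"
  define col_b where "col_b = (\<lambda>k j. b j k)"
  have "(\<Sum>i<n. \<Sum>j<n. A i j * dot n (a i) (b j)) = (\<Sum>i<n. \<Sum>j<n. \<Sum>k<n. a i k * A i j * b j k)"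
    unfolding dot_def by (simp add: sum_distrib_left algebra_simps)
  also have "\<dots> = (\<Sum>i<n. \<Sum>k<n. \<Sum>j<n. a i k * A i j * b j k)"
    by (intro sum.cong refl sum.swap)
  also have "\<dots> = (\<Sum>k<n. \<Sum>i<n. \<Sum>j<n. a i k * A i j * b j k)"
    by (rule sum.swap)
  also have "\<dots> = (\<Sum>k<n. bilin n A (col_a k) (col_b k))"
    unfolding bilin_def col_a_def col_b_def ..
  finally have expand: "(\<Sum>i<n. \<Sum>j<n. A i j * dot n (a i) (b j))
      = (\<Sum>k<n. bilin n A (col_a k) (col_b k))" .
  have "\<bar>bilin n A (col_a k) (col_b k)\<bar> \<le> sqrt (sqnorm n (col_a k)) * sqrt (sqnorm n (col_b k))" for k
    using assms by (rule bilin_abs_le_of_op_norm_le_1)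
  then have "\<bar>\<Sum>k<n. bilin n A (col_a k) (col_b k)\<bar>
      \<le> (\<Sum>k<n. \<bar>sqrt (sqnorm n (col_a k))\<bar> * \<bar>sqrt (sqnorm n (col_b k))\<bar>)"
    by (intro order_trans[OF sum_abs] sum_mono) (simp add: sqnorm_nonneg)
  also have "\<dots> \<le> L2_set (\<lambda>k. sqrt (sqnorm n (col_a k))) {..<n}
      * L2_set (\<lambda>k. sqrt (sqnorm n (col_b k))) {..<n}"
    by (rule L2_set_mult_ineq)
  also have "\<dots> = sqrt (\<Sum>k<n. sqnorm n (col_a k)) * sqrt (\<Sum>k<n. sqnorm n (col_b k))"
    unfolding L2_set_def by (simp add: sqnorm_nonneg)
  also have "(\<Sum>k<n. sqnorm n (col_a k)) = (\<Sum>i<n. dot n (a i) (a i))"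
    unfolding sqnorm_def col_a_def dot_def by (subst sum.swap) (simp add: power2_eq_square)
  also have "(\<Sum>k<n. sqnorm n (col_b k)) = (\<Sum>j<n. dot n (b j) (b j))"
    unfolding sqnorm_def col_b_def dot_def by (subst sum.swap) (simp add: power2_eq_square)
  finally show ?thesis unfolding expand .
qed

lemma quad_form_diff_le:
  assumes "sym_mat n C" "op_norm n C \<le> 1"
  shows "\<bar>quad_form n C x - quad_form n C y\<bar>
    \<le> sqrt (sqnorm n (\<lambda>i. x i - y i)) * sqrt (sqnorm n (\<lambda>i. x i + y i))"
proof -
  have "quad_form n C x - quad_form n C y = bilin n C (\<lambda>i. x i - y i) (\<lambda>i. x i + y i)"
    using bilin_commute[OF assms(1), of x y] unfolding quad_form_eq_bilin
    by (simp add: bilin_diff_left bilin_add_right)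
  also have "\<bar>\<dots>\<bar> \<le> sqrt (sqnorm n (\<lambda>i. x i - y i)) * sqrt (sqnorm n (\<lambda>i. x i + y i))"
    using assms(2) by (rule bilin_abs_le_of_op_norm_le_1)
  finally show ?thesis .
qed

section \<open>Analysis of the rounding\<close>

lemma sdp_feasible_sign_scaled:
  assumes "0 < n" "psd n Z" "\<forall>i<n. Z i i = t" "0 < t" and s: "\<forall>i<n. s i * s i = 1"
  shows "sdp_feasible n (\<lambda>i j. s i * s j * Z i j / (n * t))"
  unfolding sdp_feasible_def psd_def
proof (intro conjI allI impI)
  fix i j assume "i < n" "j < n"
  then show "s i * s j * Z i j / (n * t) = s j * s i * Z j i / (n * t)"
    using assms(2) by (simp add: psd_def mult.commute)
next
  fix x :: "nat \<Rightarrow> real"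
  have "(\<Sum>i<n. \<Sum>j<n. x i * (s i * s j * Z i j / (n * t)) * x j)
      = (\<Sum>i<n. \<Sum>j<n. (s i * x i) * Z i j * (s j * x j)) / (n * t)"
    by (simp add: sum_divide_distrib algebra_simps)
  also have "0 \<le> \<dots>" using assms(1,2,4) by (simp add: psd_def)
  finally show "0 \<le> (\<Sum>i<n. \<Sum>j<n. x i * (s i * s j * Z i j / (n * t)) * x j)" .
next
  fix i assume "i < n"
  then show "s i * s i * Z i i / (n * t) = 1 / real n"
    using assms(3,4) s by simp
qed

text \<open>
  For a cost with \<open>diag(s) C diag(s) = -C\<close>, conjugating a PSD matrix \<open>Z\<close> of constant diagonal
  \<open>t\<close> by \<open>diag(s)\<close> gives a feasible point of objective \<open>-\<langle>C, Z\<rangle>/(n t)\<close>.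
\<close>

lemma sdp_value_sign_flip_bound:
  assumes opt: "sdp_optimal n C \<rho>opt" and "0 < n"
    and Z: "psd n Z" "\<forall>i<n. Z i i = t" "0 < t"
    and flip: "\<forall>i<n. \<forall>j<n. s i * C i j * s j = - C i j" and s: "\<forall>i<n. s i * s i = 1"
  shows "- (real n * t * mat_trace n (mat_mult n C \<rho>opt)) \<le> (\<Sum>i<n. \<Sum>j<n. C i j * Z i j)"
proof -
  define \<sigma> where "\<sigma> = (\<lambda>i j. s i * s j * Z i j / (n * t))"
  have "0 < real n * t" using assms by simp
  have "mat_trace n (mat_mult n C \<sigma>) \<le> mat_trace n (mat_mult n C \<rho>opt)"
    using opt sdp_feasible_sign_scaled[OF \<open>0 < n\<close> Z s] unfolding sdp_optimal_def \<sigma>_def by blast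
  moreover have "mat_trace n (mat_mult n C \<sigma>) = (\<Sum>i<n. \<Sum>j<n. (s i * C i j * s j) * Z i j) / (n * t)"
    using Z(1) unfolding mat_trace_def mat_mult_def \<sigma>_def psd_def
    by (simp add: sum_divide_distrib algebra_simps)
  moreover have "\<dots> = - (\<Sum>i<n. \<Sum>j<n. C i j * Z i j) / (n * t)"
    using flip by (simp add: sum_negf)
  ultimately have "- mat_trace n (mat_mult n C \<rho>opt) \<le> (\<Sum>i<n. \<Sum>j<n. C i j * Z i j) / (n * t)"
    by linarith
  then show ?thesis
    using \<open>0 < real n * t\<close> by (simp add: pos_le_divide_eq algebra_simps)
qed

lemma sqrt_2_pi_mult_self: "sqrt (2/pi) * (sqrt (2/pi) * x) = 2/pi * x"
  by (simp add: mult.assoc[symmetric])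

locale psd_rounding =
  fixes n :: nat and \<rho> :: "nat \<Rightarrow> nat \<Rightarrow> real"
  assumes n_pos: "0 < n" and psd_\<rho>: "psd n \<rho>"
begin

definition root_row :: "nat \<Rightarrow> nat \<Rightarrow> real" where
  "root_row i = (\<lambda>k. mat_sqrt n \<rho> i k)"

lemma rho_eq_dot_root_rows:
  assumes "i < n" "j < n" shows "\<rho> i j = dot n (root_row i) (root_row j)"
proof -
  have "\<rho> i j = mat_mult n (mat_sqrt n \<rho>) (mat_sqrt n \<rho>) i j"
    using mat_sqrt_spec(2)[OF psd_\<rho> assms] by simp
  also have "\<dots> = dot n (root_row i) (root_row j)"
    using mat_sqrt_spec(1)[OF psd_\<rho>] assms unfolding mat_mult_def dot_def root_row_def psd_def
    by (intro sum.cong refl) simp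
  finally show ?thesis .
qed

lemma diag_nonneg: "i < n \<Longrightarrow> 0 \<le> \<rho> i i"
  by (simp add: rho_eq_dot_root_rows dot_self_nonneg)

lemma rounding_eq_sgn_pm_root_row: "rounding n \<rho> g i = sgn_pm (dot n (root_row i) g)"
  unfolding rounding_def dot_def root_row_def ..

text \<open>
  Where \<open>\<rho>\<^sub>i\<^sub>i = 0\<close> the row vanishes and the rounding outputs \<open>1\<close>; any unit vector will do
  there.
\<close>

definition unit_row :: "nat \<Rightarrow> nat \<Rightarrow> real" where
  "unit_row i = (if 0 < \<rho> i i then (\<lambda>k. root_row i k / sqrt (\<rho> i i)) else unit_vec 0)"

lemma dot_unit_row_self:
  assumes "i < n" shows "dot n (unit_row i) (unit_row i) = 1"
proof (cases "0 < \<rho> i i")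
  case True
  have "dot n (unit_row i) (unit_row i) = dot n (root_row i) (root_row i) / \<rho> i i"
    using True by (simp add: unit_row_def dot_def sum_divide_distrib)
  then show ?thesis using True rho_eq_dot_root_rows[OF assms assms] by simp
next
  case False
  have "(\<Sum>k<n. unit_vec 0 k * unit_vec 0 k) = (\<Sum>k<n. if k = 0 then 1 else 0)"
    by (intro sum.cong) (auto simp: unit_vec_def)
  then show ?thesis using False n_pos by (simp add: unit_row_def dot_def)
qed

definition sign_round :: "(nat \<Rightarrow> real) \<Rightarrow> nat \<Rightarrow> real" where
  "sign_round g i = sgn_pm (dot n (unit_row i) g)"

lemma rounding_eq_sign_round:
  assumes "i < n"
  shows "rounding n \<rho> g i = (if 0 < \<rho> i i then sign_round g i else 1)"
proof (cases "0 < \<rho> i i")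
  case True
  have "dot n (unit_row i) g = dot n (root_row i) g / sqrt (\<rho> i i)"
    using True by (simp add: unit_row_def dot_def sum_divide_distrib)
  then show ?thesis
    using True by (simp add: rounding_eq_sgn_pm_root_row sign_round_def sgn_pm_def divide_less_0_iff)
next
  case False
  then have "dot n (root_row i) (root_row i) = 0"
    using diag_nonneg[OF assms] rho_eq_dot_root_rows[OF assms assms] by simp
  then show ?thesis
    using False by (simp add: rounding_eq_sgn_pm_root_row dot_eq_0_if_self_eq_0 sgn_pm_def)
qed

lemma sign_round_measurable [measurable]: "(\<lambda>g. sign_round g i) \<in> borel_measurable (gauss_vec n)"
  unfolding sign_round_def by measurable

lemma abs_sign_round [simp]: "\<bar>sign_round g i\<bar> = 1"
  by (simp add: sign_round_def)

lemma integrable_sign_round_mult: "integrable (gauss_vec n) (\<lambda>g. sign_round g i * sign_round g j)"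
  by (rule gauss.integrable_const_bound[where B=1]) (auto simp: abs_mult)

lemma integrable_sign_round_mult_dot: "integrable (gauss_vec n) (\<lambda>g. sign_round g i * dot n a g)"
  unfolding sign_round_def by (rule integrable_sgn_pm_dot_mult_dot)

lemma expectation_sign_round_mult_dot:
  "i < n \<Longrightarrow> (\<integral>g. sign_round g i * dot n a g \<partial>gauss_vec n) = sqrt (2/pi) * dot n (unit_row i) a"
  unfolding sign_round_def by (rule gauss_sgn_dot_correlation[OF dot_unit_row_self])

definition residual :: "nat \<Rightarrow> (nat \<Rightarrow> real) \<Rightarrow> real" where
  "residual i g = sign_round g i - sqrt (2/pi) * dot n (unit_row i) g"

definition residual_cov :: "nat \<Rightarrow> nat \<Rightarrow> real" where
  "residual_cov i j = (\<integral>g. residual i g * residual j g \<partial>gauss_vec n)"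

definition unit_gram :: "nat \<Rightarrow> nat \<Rightarrow> real" where
  "unit_gram i j = dot n (unit_row i) (unit_row j)"

lemma residual_mult_eq:
  "residual i g * residual j g = sign_round g i * sign_round g j
     - sqrt (2/pi) * (sign_round g i * dot n (unit_row j) g)
     - sqrt (2/pi) * (sign_round g j * dot n (unit_row i) g)
     + 2/pi * (dot n (unit_row i) g * dot n (unit_row j) g)"
  unfolding residual_def by (simp add: algebra_simps sqrt_2_pi_mult_self)

lemma integrable_residual_mult: "integrable (gauss_vec n) (\<lambda>g. residual i g * residual j g)"
  unfolding residual_mult_eq
  using integrable_sign_round_mult integrable_sign_round_mult_dot
    integrable.intros[OF gauss_dot_covariance] by auto

lemma expectation_sign_round_mult:
  assumes "i < n" "j < n"
  shows "(\<integral>g. sign_round g i * sign_round g j \<partial>gauss_vec n) = residual_cov i j + 2/pi * unit_gram i j"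
proof -
  have "residual_cov i j = (\<integral>g. sign_round g i * sign_round g j \<partial>gauss_vec n)
      - sqrt (2/pi) * (\<integral>g. sign_round g i * dot n (unit_row j) g \<partial>gauss_vec n)
      - sqrt (2/pi) * (\<integral>g. sign_round g j * dot n (unit_row i) g \<partial>gauss_vec n)
      + 2/pi * (\<integral>g. dot n (unit_row i) g * dot n (unit_row j) g \<partial>gauss_vec n)"
    unfolding residual_cov_def residual_mult_eq
    using integrable_sign_round_mult integrable_sign_round_mult_dot
      integrable.intros[OF gauss_dot_covariance]
    by simp
  also have "\<dots> = (\<integral>g. sign_round g i * sign_round g j \<partial>gauss_vec n) - 2/pi * unit_gram i j"
  proof -
    have "dot n (unit_row j) (unit_row i) = unit_gram i j"
      unfolding unit_gram_def by (rule dot_commute)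
    then show ?thesis
      by (simp add: expectation_sign_round_mult_dot assms unit_gram_def sqrt_2_pi_mult_self
          has_bochner_integral_integral_eq[OF gauss_dot_covariance])
  qed
  finally show ?thesis by simp
qed

lemma residual_cov_diag:
  assumes "i < n" shows "residual_cov i i = 1 - 2/pi"
proof -
  have "sign_round g i * sign_round g i = 1" for g
    by (simp add: sign_round_def sgn_pm_def)
  then show ?thesis
    using expectation_sign_round_mult[OF assms assms] dot_unit_row_self[OF assms]
    by (simp add: unit_gram_def gauss.prob_space)
qed

lemma psd_residual_cov: "psd n residual_cov"
  unfolding psd_def
proof (intro conjI allI impI)
  show "residual_cov i j = residual_cov j i" for i j
    unfolding residual_cov_def by (simp add: mult.commute)
  fix a :: "nat \<Rightarrow> real"
  have "(\<Sum>i<n. \<Sum>j<n. a i * residual_cov i j * a j)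
      = (\<integral>g. (\<Sum>i<n. \<Sum>j<n. a i * (residual i g * residual j g) * a j) \<partial>gauss_vec n)"
    unfolding residual_cov_def using integrable_residual_mult by (simp add: integral_sum integrable_sum)
  also have "\<dots> = (\<integral>g. (\<Sum>i<n. a i * residual i g)\<^sup>2 \<partial>gauss_vec n)"
    by (intro Bochner_Integration.integral_cong refl)
      (simp add: power2_eq_square sum_product algebra_simps)
  also have "0 \<le> \<dots>" by simp
  finally show "0 \<le> (\<Sum>i<n. \<Sum>j<n. a i * residual_cov i j * a j)" .
qed

lemma expectation_quad_form_sign_round:
  "(\<integral>g. quad_form n C (sign_round g) \<partial>gauss_vec n)
    = (\<Sum>i<n. \<Sum>j<n. C i j * residual_cov i j) + 2/pi * (\<Sum>i<n. \<Sum>j<n. C i j * unit_gram i j)"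
proof -
  have "(\<integral>g. quad_form n C (sign_round g) \<partial>gauss_vec n)
      = (\<Sum>i<n. \<Sum>j<n. C i j * (\<integral>g. sign_round g i * sign_round g j \<partial>gauss_vec n))"
    unfolding quad_form_def using integrable_sign_round_mult
    by (simp add: integral_sum integrable_sum algebra_simps)
  then show ?thesis
    by (simp add: expectation_sign_round_mult sum.distrib sum_distrib_left algebra_simps)
qed

end

lemma sq_one_minus_le_abs:
  fixes a :: real assumes "0 \<le> a" shows "(1 - a)\<^sup>2 \<le> \<bar>1 - a\<^sup>2\<bar>"
proof (cases "a \<le> 1")
  case True
  have "a * a \<le> a * 1" using True assms by (intro mult_left_mono) auto
  then show ?thesis by (simp add: power2_eq_square algebra_simps)
next
  case False
  then show ?thesis by (simp add: power2_eq_square algebra_simps)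
qed

lemma sq_add_le_4:
  fixes a b :: real assumes "\<bar>a\<bar> = 1" "\<bar>b\<bar> = 1" shows "(a + b)\<^sup>2 \<le> 4"
proof -
  have "a\<^sup>2 = 1" "b\<^sup>2 = 1" using assms by (metis power2_abs power_one)+
  moreover have "(a + b)\<^sup>2 + (a - b)\<^sup>2 = 2 * a\<^sup>2 + 2 * b\<^sup>2"
    by (simp add: power2_eq_square algebra_simps)
  ultimately show ?thesis using zero_le_power2[of "a - b"] by linarith
qed

context psd_rounding
begin

definition diag_deviation :: real where
  "diag_deviation = (\<Sum>i<n. \<bar>\<rho> i i - 1 / real n\<bar>)"

lemma diag_deviation_nonneg: "0 \<le> diag_deviation"
  by (simp add: diag_deviation_def sum_nonneg)

lemma sqnorm_rounding_diff_le:
  "sqnorm n (\<lambda>i. rounding n \<rho> g i - sign_round g i) \<le> 4 * n * diag_deviation"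
proof -
  have "(rounding n \<rho> g i - sign_round g i)\<^sup>2 \<le> 4 * n * \<bar>\<rho> i i - 1 / real n\<bar>" if "i < n" for i
  proof (cases "0 < \<rho> i i")
    case False
    then have "\<rho> i i = 0" using diag_nonneg[OF that] by simp
    moreover have "\<bar>rounding n \<rho> g i\<bar> = 1" by (simp add: rounding_def sgn_pm_def)
    moreover have "\<bar>sign_round g i\<bar> = 1" by simp
    ultimately show ?thesis
      using n_pos by (auto simp: abs_if power2_eq_square split: if_splits)
  qed (simp add: rounding_eq_sign_round[OF that])
  then have "sqnorm n (\<lambda>i. rounding n \<rho> g i - sign_round g i)
      \<le> (\<Sum>i<n. 4 * n * \<bar>\<rho> i i - 1 / real n\<bar>)"
    unfolding sqnorm_def by (intro sum_mono) auto
  then show ?thesis by (simp add: diag_deviation_def sum_distrib_left)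
qed

lemma quad_form_rounding_ge:
  assumes "sym_mat n C" "op_norm n C \<le> 1"
  shows "quad_form n C (sign_round g) - 4 * n * sqrt diag_deviation \<le> quad_form n C (rounding n \<rho> g)"
proof -
  let ?a = "rounding n \<rho> g" and ?b = "sign_round g"
  have "\<bar>?a i\<bar> = 1" for i by (simp add: rounding_def sgn_pm_def)
  then have "(?a i + ?b i)\<^sup>2 \<le> 4" for i by (simp add: sq_add_le_4)
  then have sum_le: "sqnorm n (\<lambda>i. ?a i + ?b i) \<le> 4 * n"
    unfolding sqnorm_def using sum_mono[of "{..<n}" "\<lambda>i. (?a i + ?b i)\<^sup>2" "\<lambda>_. 4"] by simp
  have "\<bar>quad_form n C ?a - quad_form n C ?b\<bar>
      \<le> sqrt (sqnorm n (\<lambda>i. ?a i - ?b i)) * sqrt (sqnorm n (\<lambda>i. ?a i + ?b i))"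
    by (rule quad_form_diff_le[OF assms])
  also have "\<dots> \<le> sqrt (4 * n * diag_deviation) * sqrt (4 * n)"
    using sqnorm_rounding_diff_le sum_le
    by (intro mult_mono real_sqrt_le_mono) (auto simp: diag_deviation_nonneg sqnorm_nonneg)
  also have "\<dots> = 4 * n * sqrt diag_deviation"
    by (simp add: real_sqrt_mult power2_eq_square[symmetric])
  finally show ?thesis by linarith
qed

lemma integrable_quad_form_sign_round:
  "integrable (gauss_vec n) (\<lambda>g. quad_form n C (sign_round g))"
  unfolding quad_form_def using integrable_sign_round_mult
  by (simp add: integrable_sum algebra_simps)

lemma integrable_quad_form_rounding:
  "integrable (gauss_vec n) (\<lambda>g. quad_form n C (rounding n \<rho> g))"
proof (rule gauss.integrable_const_bound[where B="\<Sum>i<n. \<Sum>j<n. \<bar>C i j\<bar>"])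
  show "(\<lambda>g. quad_form n C (rounding n \<rho> g)) \<in> borel_measurable (gauss_vec n)"
    unfolding quad_form_def rounding_eq_sgn_pm_root_row by measurable
  have "\<bar>quad_form n C (rounding n \<rho> g)\<bar> \<le> (\<Sum>i<n. \<Sum>j<n. \<bar>C i j\<bar>)" for g
  proof -
    have "\<bar>quad_form n C (rounding n \<rho> g)\<bar>
        \<le> (\<Sum>i<n. \<Sum>j<n. \<bar>rounding n \<rho> g i * C i j * rounding n \<rho> g j\<bar>)"
      unfolding quad_form_def by (rule order_trans[OF sum_abs sum_mono[OF sum_abs]])
    also have "\<dots> = (\<Sum>i<n. \<Sum>j<n. \<bar>C i j\<bar>)"
    proof -
      have "\<bar>rounding n \<rho> g i\<bar> = 1" for i by (simp add: rounding_def sgn_pm_def)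
      then show ?thesis by (simp add: abs_mult)
    qed
    finally show ?thesis .
  qed
  then show "AE g in gauss_vec n. norm (quad_form n C (rounding n \<rho> g)) \<le> (\<Sum>i<n. \<Sum>j<n. \<bar>C i j\<bar>)"
    by simp
qed

lemma expectation_quad_form_rounding_ge:
  assumes "sym_mat n C" "op_norm n C \<le> 1"
  shows "(\<integral>g. quad_form n C (sign_round g) \<partial>gauss_vec n) - 4 * n * sqrt diag_deviation
    \<le> (\<integral>g. quad_form n C (rounding n \<rho> g) \<partial>gauss_vec n)"
proof -
  have "(\<integral>g. quad_form n C (sign_round g) - 4 * n * sqrt diag_deviation \<partial>gauss_vec n)
      \<le> (\<integral>g. quad_form n C (rounding n \<rho> g) \<partial>gauss_vec n)"
    using integrable_quad_form_sign_round integrable_quad_form_rounding quad_form_rounding_ge[OF assms]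
    by (intro integral_mono) auto
  then show ?thesis
    using integrable_quad_form_sign_round by (simp add: gauss.prob_space)
qed

end

context psd_rounding
begin

definition scaled_row :: "nat \<Rightarrow> nat \<Rightarrow> real" where
  "scaled_row i = (\<lambda>k. sqrt n * root_row i k)"

definition row_defect :: "nat \<Rightarrow> nat \<Rightarrow> real" where
  "row_defect i = (\<lambda>k. unit_row i k - scaled_row i k)"

lemma dot_scaled_row:
  assumes "i < n" "j < n" shows "dot n (scaled_row i) (scaled_row j) = n * \<rho> i j"
proof -
  have "sqrt n * x * (sqrt n * y) = (sqrt n * sqrt n) * (x * y)" for x y :: real
    by (simp only: mult_ac)
  then have sq: "sqrt n * x * (sqrt n * y) = n * (x * y)" for x y :: real
    by simp
  have "dot n (scaled_row i) (scaled_row j) = n * dot n (root_row i) (root_row j)"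
    unfolding scaled_row_def dot_def sum_distrib_left by (simp add: sq)
  then show ?thesis using rho_eq_dot_root_rows[OF assms] by simp
qed

lemma dot_row_defect_self_le:
  assumes "i < n"
  shows "dot n (row_defect i) (row_defect i) \<le> n * \<bar>\<rho> i i - 1 / real n\<bar>"
proof (cases "0 < \<rho> i i")
  case True
  let ?r = "1 / sqrt (\<rho> i i) - sqrt n"
  have "row_defect i = (\<lambda>k. ?r * root_row i k)"
    using True by (auto simp: row_defect_def unit_row_def scaled_row_def fun_eq_iff algebra_simps)
  then have "dot n (row_defect i) (row_defect i) = ?r\<^sup>2 * dot n (root_row i) (root_row i)"
    unfolding dot_def sum_distrib_left by (intro sum.cong refl) (simp add: power2_eq_square mult_ac)
  also have "\<dots> = (?r * sqrt (\<rho> i i))\<^sup>2"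
    using True by (simp add: rho_eq_dot_root_rows[OF assms assms, symmetric] power_mult_distrib)
  also have "\<dots> = (1 - sqrt (n * \<rho> i i))\<^sup>2"
    using True by (simp add: algebra_simps real_sqrt_mult)
  also have "\<dots> \<le> \<bar>1 - n * \<rho> i i\<bar>"
    using sq_one_minus_le_abs[of "sqrt (n * \<rho> i i)"] True by simp
  also have "\<dots> = n * \<bar>\<rho> i i - 1 / real n\<bar>"
  proof -
    have "1 - n * \<rho> i i = n * (1 / real n - \<rho> i i)" using n_pos by (simp add: field_simps)
    then show ?thesis by (simp add: abs_mult abs_minus_commute)
  qed
  finally show ?thesis .
next
  case False
  then have "\<rho> i i = 0" using diag_nonneg[OF assms] by simp
  then have "root_row i k = 0" if "k < n" for k
    using rho_eq_dot_root_rows[OF assms assms] that by (simp add: dot_self sqnorm_eq_0_imp)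
  then have "dot n (row_defect i) (row_defect i) = dot n (unit_row i) (unit_row i)"
    unfolding dot_def row_defect_def scaled_row_def by (intro sum.cong) auto
  then show ?thesis using dot_unit_row_self[OF assms] \<open>\<rho> i i = 0\<close> n_pos by simp
qed

lemma sum_dot_row_defect_le: "(\<Sum>i<n. dot n (row_defect i) (row_defect i)) \<le> n * diag_deviation"
  unfolding diag_deviation_def sum_distrib_left by (intro sum_mono dot_row_defect_self_le) simp

lemma sum_dot_scaled_row_le: "(\<Sum>i<n. dot n (scaled_row i) (scaled_row i)) \<le> n * (1 + diag_deviation)"
proof -
  have "(\<Sum>i<n. \<rho> i i) \<le> (\<Sum>i<n. 1 / real n + \<bar>\<rho> i i - 1 / real n\<bar>)"
    by (intro sum_mono) linarith
  also have "\<dots> = 1 + diag_deviation" using n_pos by (simp add: diag_deviation_def sum.distrib)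
  finally show ?thesis
    using n_pos by (simp add: dot_scaled_row sum_distrib_left[symmetric] mult_left_mono)
qed

lemma sum_mult_unit_gram_minus_trace:
  "(\<Sum>i<n. \<Sum>j<n. C i j * unit_gram i j) - n * mat_trace n (mat_mult n C \<rho>)
    = (\<Sum>i<n. \<Sum>j<n. C i j * dot n (row_defect i) (unit_row j))
      + (\<Sum>i<n. \<Sum>j<n. C i j * dot n (scaled_row i) (row_defect j))"
proof -
  have "n * mat_trace n (mat_mult n C \<rho>) = (\<Sum>i<n. \<Sum>j<n. C i j * dot n (scaled_row i) (scaled_row j))"
    unfolding mat_trace_def mat_mult_def sum_distrib_left
    using psd_\<rho> by (intro sum.cong refl) (simp add: dot_scaled_row psd_def)
  moreover have "unit_gram i j - dot n (scaled_row i) (scaled_row j)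
      = dot n (row_defect i) (unit_row j) + dot n (scaled_row i) (row_defect j)" for i j
    unfolding unit_gram_def row_defect_def dot_def by (simp add: algebra_simps sum_subtractf)
  ultimately show ?thesis by (simp add: sum_subtractf sum.distrib[symmetric] algebra_simps)
qed

lemma sum_mult_unit_gram_ge:
  assumes "op_norm n C \<le> 1" "diag_deviation \<le> 3"
  shows "n * mat_trace n (mat_mult n C \<rho>) - 3 * (n * sqrt diag_deviation)
    \<le> (\<Sum>i<n. \<Sum>j<n. C i j * unit_gram i j)"
proof -
  let ?\<delta> = diag_deviation
  define A where "A = (\<Sum>i<n. \<Sum>j<n. C i j * dot n (row_defect i) (unit_row j))"
  define B where "B = (\<Sum>i<n. \<Sum>j<n. C i j * dot n (scaled_row i) (row_defect j))"
  have "(\<Sum>j<n. dot n (unit_row j) (unit_row j)) = n" by (simp add: dot_unit_row_self)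
  then have "\<bar>A\<bar> \<le> sqrt (\<Sum>i<n. dot n (row_defect i) (row_defect i)) * sqrt n"
    unfolding A_def using sum_mult_dot_rows_le[OF assms(1), of row_defect unit_row] by simp
  also have "\<dots> \<le> sqrt (n * ?\<delta>) * sqrt n"
    by (intro mult_right_mono real_sqrt_le_mono sum_dot_row_defect_le) simp
  also have "\<dots> = n * sqrt ?\<delta>"
    by (simp add: real_sqrt_mult)
  finally have A_le: "\<bar>A\<bar> \<le> n * sqrt ?\<delta>" .
  have "\<bar>B\<bar> \<le> sqrt (\<Sum>i<n. dot n (scaled_row i) (scaled_row i))
      * sqrt (\<Sum>j<n. dot n (row_defect j) (row_defect j))"
    unfolding B_def by (rule sum_mult_dot_rows_le[OF assms(1)])
  also have "\<dots> \<le> sqrt (4 * n) * sqrt (n * ?\<delta>)"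
  proof -
    have "real n * (1 + ?\<delta>) \<le> real n * 4" using assms(2) by (intro mult_left_mono) auto
    then show ?thesis
      using sum_dot_scaled_row_le
      by (intro mult_mono real_sqrt_le_mono sum_dot_row_defect_le)
        (auto simp: diag_deviation_nonneg sum_nonneg dot_self_nonneg)
  qed
  also have "\<dots> = 2 * (n * sqrt ?\<delta>)"
    by (simp add: real_sqrt_mult)
  finally have B_le: "\<bar>B\<bar> \<le> 2 * (n * sqrt ?\<delta>)" .
  show ?thesis
    using sum_mult_unit_gram_minus_trace[of C] abs_le_D2[OF A_le] abs_le_D2[OF B_le]
    unfolding A_def B_def by linarith
qed

lemma sum_mult_residual_cov_ge:
  assumes "sdp_optimal n C \<rho>opt"
    and "\<forall>i<n. \<forall>j<n. s i * C i j * s j = - C i j" "\<forall>i<n. s i * s i = 1"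
  shows "- (n * (1 - 2/pi) * mat_trace n (mat_mult n C \<rho>opt))
    \<le> (\<Sum>i<n. \<Sum>j<n. C i j * residual_cov i j)"
  using pi_gt3 residual_cov_diag
  by (intro sdp_value_sign_flip_bound[OF assms(1) n_pos psd_residual_cov _ _ assms(2,3)])
    (auto simp: field_simps)

end

lemma (in psd_rounding) expectation_rounding_ge:
  assumes C: "sym_mat n C" "op_norm n C \<le> 1" and opt: "sdp_optimal n C \<rho>opt"
    and flip: "\<forall>i<n. \<forall>j<n. s i * C i j * s j = - C i j" "\<forall>i<n. s i * s i = 1"
    and gap: "mat_trace n (mat_mult n C \<rho>opt) - mat_trace n (mat_mult n C \<rho>) \<le> \<epsilon>"
    and dev: "diag_deviation \<le> \<epsilon>" and "\<epsilon> \<le> 1/2"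
  shows "(4/pi - 1) * n * mat_trace n (mat_mult n C \<rho>opt) - 8 * n * sqrt \<epsilon>
    \<le> (\<integral>g. quad_form n C (rounding n \<rho> g) \<partial>gauss_vec n)"
proof -
  define V where "V = mat_trace n (mat_mult n C \<rho>opt)"
  define T where "T = mat_trace n (mat_mult n C \<rho>)"
  define Z where "Z = (\<Sum>i<n. \<Sum>j<n. C i j * residual_cov i j)"
  define X where "X = (\<Sum>i<n. \<Sum>j<n. C i j * unit_gram i j)"
  define p where "p = 2 / pi"
  define N where "N = real n"
  define q where "q = sqrt \<epsilon>"
  have "0 \<le> \<epsilon>" using dev diag_deviation_nonneg by linarith
  have p: "0 \<le> p" "p \<le> 2/3" unfolding p_def using pi_gt3 by (auto simp: divide_le_eq)
  have "0 \<le> N * q" unfolding N_def q_def using \<open>0 \<le> \<epsilon>\<close> by simp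
  have "\<epsilon> \<le> q"
    using mult_left_le[of "sqrt \<epsilon>" "sqrt \<epsilon>"] \<open>0 \<le> \<epsilon>\<close> \<open>\<epsilon> \<le> 1/2\<close> unfolding q_def by simp
  have sqrt_dev: "N * sqrt diag_deviation \<le> N * q"
    unfolding N_def q_def using dev by (intro mult_left_mono) auto
  have Z_ge: "- (N * V) + p * (N * V) \<le> Z"
    using sum_mult_residual_cov_ge[OF opt flip] unfolding N_def V_def Z_def p_def
    by (simp add: algebra_simps)
  have "N * T - 3 * (N * q) \<le> X"
    using sum_mult_unit_gram_ge[OF C(2)] dev \<open>\<epsilon> \<le> 1/2\<close> sqrt_dev
    unfolding N_def T_def X_def by fastforce
  from mult_left_mono[OF this p(1)]
  have X_ge: "p * (N * T) - 3 * (p * (N * q)) \<le> p * X" by (simp add: algebra_simps)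
  have E_ge: "Z + p * X - 4 * (N * q) \<le> (\<integral>g. quad_form n C (rounding n \<rho> g) \<partial>gauss_vec n)"
    using expectation_quad_form_rounding_ge[OF C] expectation_quad_form_sign_round[of C] sqrt_dev
    unfolding Z_def X_def p_def N_def by simp
  have "N * (V - \<epsilon>) \<le> N * T"
    using gap unfolding N_def V_def T_def by (intro mult_left_mono) auto
  from mult_left_mono[OF this p(1)]
  have T_ge: "p * (N * V) - p * (N * \<epsilon>) \<le> p * (N * T)" by (simp add: algebra_simps)
  have "p * (N * \<epsilon>) \<le> 1 * (N * q)"
    using p \<open>\<epsilon> \<le> q\<close> \<open>0 \<le> \<epsilon>\<close> unfolding N_def by (intro mult_mono) auto
  moreover from mult_right_mono[OF p(2) \<open>0 \<le> N * q\<close>] have "p * (N * q) \<le> (2/3) * (N * q)" .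
  ultimately have "2 * (p * (N * V)) - N * V - 8 * (N * q)
      \<le> (\<integral>g. quad_form n C (rounding n \<rho> g) \<partial>gauss_vec n)"
    using Z_ge X_ge E_ge T_ge \<open>0 \<le> N * q\<close> by linarith
  then show ?thesis unfolding N_def p_def q_def V_def by (simp add: algebra_simps)
qed

lemma sym_mat_block_cost: "sym_mat (2 * m) (block_cost m B)"
  unfolding sym_mat_def block_cost_def by auto

definition block_sign :: "nat \<Rightarrow> nat \<Rightarrow> real" where
  "block_sign m i = (if i < m then 1 else - 1)"

lemma block_cost_sign_flip:
  "\<forall>i<2 * m. \<forall>j<2 * m. block_sign m i * block_cost m B i j * block_sign m j = - block_cost m B i j"
  unfolding block_sign_def block_cost_def by auto

lemma block_sign_sq: "\<forall>i<2 * m. block_sign m i * block_sign m i = 1"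
  unfolding block_sign_def by auto

lemma dim_pos_if_op_norm_nonzero: "op_norm n A \<noteq> 0 \<Longrightarrow> 0 < n"
  by (rule ccontr) (simp add: op_norm_def)

lemma sqrt_le_powr_one_third: "0 \<le> e \<Longrightarrow> e \<le> 1 \<Longrightarrow> sqrt e \<le> e powr (1/3)"
  by (simp add: powr_half_sqrt[symmetric] powr_mono')

theorem theorem4:
  shows "\<exists>K::real. \<forall>(m::nat) (B::nat \<Rightarrow> nat \<Rightarrow> real) (\<rho>opt::nat \<Rightarrow> nat \<Rightarrow> real)
           (\<rho>::nat \<Rightarrow> nat \<Rightarrow> real) (\<epsilon>::real).
     let n = 2 * m; C = block_cost m B in
     op_norm n C = 1 \<longrightarrow>
     sdp_optimal n C \<rho>opt \<longrightarrow>
     psd n \<rho> \<longrightarrow>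
     mat_trace n (mat_mult n C \<rho>opt) - mat_trace n (mat_mult n C \<rho>) \<le> \<epsilon> \<longrightarrow>
     (\<Sum>i<n. \<bar>\<rho> i i - 1 / real n\<bar>) \<le> \<epsilon> \<longrightarrow>
     0 \<le> \<epsilon> \<longrightarrow> \<epsilon> \<le> 1/2 \<longrightarrow>
     (\<integral>g. quad_form n C (rounding n \<rho> g) \<partial>gauss_vec n)
       \<ge> (4 / pi - 1) * real n * mat_trace n (mat_mult n C \<rho>opt) - K * real n * \<epsilon> powr (1/3)"
proof (intro exI[of _ 8] allI, unfold Let_def, intro impI)
  fix m B \<rho>opt \<rho> and \<epsilon> :: real
  let ?n = "2 * m" and ?C = "block_cost m B"
  assume norm: "op_norm ?n ?C = 1" and opt: "sdp_optimal ?n ?C \<rho>opt" and "psd ?n \<rho>"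
    and gap: "mat_trace ?n (mat_mult ?n ?C \<rho>opt) - mat_trace ?n (mat_mult ?n ?C \<rho>) \<le> \<epsilon>"
    and dev: "(\<Sum>i<?n. \<bar>\<rho> i i - 1 / real ?n\<bar>) \<le> \<epsilon>" and "0 \<le> \<epsilon>" "\<epsilon> \<le> 1/2"
  interpret psd_rounding ?n \<rho>
    using dim_pos_if_op_norm_nonzero[of ?n ?C] norm \<open>psd ?n \<rho>\<close> by unfold_locales simp_all
  have "(4/pi - 1) * ?n * mat_trace ?n (mat_mult ?n ?C \<rho>opt) - 8 * ?n * sqrt \<epsilon>
      \<le> (\<integral>g. quad_form ?n ?C (rounding ?n \<rho> g) \<partial>gauss_vec ?n)"
    using sym_mat_block_cost norm opt block_cost_sign_flip block_sign_sq gap dev \<open>\<epsilon> \<le> 1/2\<close>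
    by (intro expectation_rounding_ge) (simp_all add: diag_deviation_def)
  moreover have "8 * ?n * sqrt \<epsilon> \<le> 8 * ?n * \<epsilon> powr (1/3)"
    using sqrt_le_powr_one_third \<open>0 \<le> \<epsilon>\<close> \<open>\<epsilon> \<le> 1/2\<close> by (intro mult_left_mono) auto
  ultimately show "(4/pi - 1) * real ?n * mat_trace ?n (mat_mult ?n ?C \<rho>opt) - 8 * real ?n * \<epsilon> powr (1/3)
      \<le> (\<integral>g. quad_form ?n ?C (rounding ?n \<rho> g) \<partial>gauss_vec ?n)"
    by linarith
qed

end
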